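(* Let $(G,u,v)$ be a rigidly marked theta graph $G=\theta_{n_0,n_1,n_2}$, let $D$ be a divisor of degree $2$ on $G$, and for $t\in\mathbb Z$ set $D'_t=D+t(u-v)$. Then for every $t\in\mathbb Z$, $$\tau^{u,v}_D(t)=\begin{cases} t-2 & \text{if } D'_t\sim 2u,\\ t-1 & \text{if } D'_t\sim u+w \text{ for some vertex } w\ne u,v,\\ t+1 & \text{if } D'_t\sim v+w \text{ for some vertex } w\ne \bar u,\bar v,\\ t+2 & \text{if } D'_t\sim v+\bar u,\\ t & \text{otherwise.}\end{cases}$$
   Context: A graph is a finite, connected, loopless multigraph (parallel edges allowed). A divisor is an element of the free abelian group on $V(G)$. Linear equivalence $\sim$ is generated by chip-firing (firing $w$ subtracts $\mathrm{val}(w)$ chips from $w$ and adds to each other vertex the number of edges joining it to $w$). The rank $r(D)$ is $-1$ if $D$ is not equivalent to an effective divisor, else the largest $r\ge0$ such that $D-E$ is equivalent to an effective divisor for every effective $E$ of degree $r$. $\delta(P)$ is $1$ if $P$ holds and $0$ otherwise. A twice-marked graph $(G,u,v)$ is a graph with two chosen vertices. A twist of $D$ is $D+au+bv$. $\Delta(D)=r(D)-r(D-u)-r(D-v)+r(D-u-v)$. $D$ is submodular if $\Delta(D')\ge0$ for all twists $D'$. If $D$ is submodular, its transmission permutation $\tau^{u,v}_D$ is the unique bijection $\mathbb Z\to\mathbb Z$ with $\delta(\tau^{u,v}_D(b)=a)=\Delta(D+au-bv)$ for all $a,b$. $(G,u,v)$ is rigidly marked if every divisor on $G$ is submodular and $r(u+v)=0$.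 The theta graph $\theta_{n_0,n_1,n_2}$ is obtained by joining two vertices by three internally disjoint paths of lengths $n_0,n_1,n_2\ge1$ (genus $2$). Its vertices are labelled $v_{\alpha,i}$ ($0\le\alpha\le2$, $0\le i\le n_\alpha$), $v_{\alpha,i}$ at distance $i$ from $v_{0,0}$ along path $\alpha$; $v_{\alpha,0}=v_{0,0}$, $v_{\alpha,n_\alpha}=v_{0,n_0}$. For a vertex $v_{\alpha,i}$ set $\overline{v_{\alpha,i}}=v_{\alpha,n_\alpha-i}$ (well defined; it satisfies $\overline{w}\sim K_G-w$ where $K_G=\sum_w(\mathrm{val}(w)-2)w$). *)

theory Defs
  imports Main "HOL-Library.Function_Algebras"
begin

text \<open>A multigraph is given by a finite vertex set V and a symmetric edge-multiplicity
  function m (m x y = number of edges joining x and y; zero outside V and on the diagonal).\<close>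

definition is_div :: "'v set \<Rightarrow> ('v \<Rightarrow> int) \<Rightarrow> bool" where
  "is_div V D \<longleftrightarrow> (\<forall>x. x \<notin> V \<longrightarrow> D x = 0)"

definition effective :: "('v \<Rightarrow> int) \<Rightarrow> bool" where
  "effective D \<longleftrightarrow> (\<forall>x. D x \<ge> 0)"

definition deg :: "'v set \<Rightarrow> ('v \<Rightarrow> int) \<Rightarrow> int" where
  "deg V D = (\<Sum>x\<in>V. D x)"

definition chip :: "'v \<Rightarrow> 'v \<Rightarrow> int" where
  "chip w = (\<lambda>x. if x = w then 1 else 0)"

definition val :: "'v set \<Rightarrow> ('v \<Rightarrow> 'v \<Rightarrow> nat) \<Rightarrow> 'v \<Rightarrow> nat" where
  "val V m w = (\<Sum>y\<in>V. m w y)"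

definition fire :: "'v set \<Rightarrow> ('v \<Rightarrow> 'v \<Rightarrow> nat) \<Rightarrow> 'v \<Rightarrow> ('v \<Rightarrow> int) \<Rightarrow> ('v \<Rightarrow> int)" where
  "fire V m w D = (\<lambda>x. if x = w then D x - int (val V m w) else D x + int (m x w))"

definition lin_equiv :: "'v set \<Rightarrow> ('v \<Rightarrow> 'v \<Rightarrow> nat) \<Rightarrow> ('v \<Rightarrow> int) \<Rightarrow> ('v \<Rightarrow> int) \<Rightarrow> bool" where
  "lin_equiv V m = equivclp (\<lambda>D D'. \<exists>w\<in>V. D' = fire V m w D)"

definition equiv_eff :: "'v set \<Rightarrow> ('v \<Rightarrow> 'v \<Rightarrow> nat) \<Rightarrow> ('v \<Rightarrow> int) \<Rightarrow> bool" where
  "equiv_eff V m D \<longleftrightarrow> (\<exists>F. is_div V F \<and> effective F \<and> lin_equiv V m D F)"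

definition rank :: "'v set \<Rightarrow> ('v \<Rightarrow> 'v \<Rightarrow> nat) \<Rightarrow> ('v \<Rightarrow> int) \<Rightarrow> int" where
  "rank V m D =
    (if \<not> equiv_eff V m D then -1
     else int (GREATEST r::nat. \<forall>E. is_div V E \<and> effective E \<and> deg V E = int r
                                   \<longrightarrow> equiv_eff V m (D - E)))"

definition Delta :: "'v set \<Rightarrow> ('v \<Rightarrow> 'v \<Rightarrow> nat) \<Rightarrow> 'v \<Rightarrow> 'v \<Rightarrow> ('v \<Rightarrow> int) \<Rightarrow> int" where
  "Delta V m u v D = rank V m D - rank V m (D - chip u) - rank V m (D - chip v)
                     + rank V m (D - chip u - chip v)"

definition submodular :: "'v set \<Rightarrow> ('v \<Rightarrow> 'v \<Rightarrow> nat) \<Rightarrow> 'v \<Rightarrow> 'v \<Rightarrow> ('v \<Rightarrow> int) \<Rightarrow> bool" where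
  "submodular V m u v D \<longleftrightarrow>
     (\<forall>a b::int. Delta V m u v (D + (\<lambda>x. a * chip u x) + (\<lambda>x. b * chip v x)) \<ge> 0)"

definition transmission :: "'v set \<Rightarrow> ('v \<Rightarrow> 'v \<Rightarrow> nat) \<Rightarrow> 'v \<Rightarrow> 'v \<Rightarrow> ('v \<Rightarrow> int) \<Rightarrow> int \<Rightarrow> int" where
  "transmission V m u v D = (THE \<tau>. bij \<tau> \<and>
      (\<forall>a b::int. (if \<tau> b = a then 1 else 0) = Delta V m u v (D + (\<lambda>x. a * chip u x) - (\<lambda>x. b * chip v x))))"

definition rigidly_marked :: "'v set \<Rightarrow> ('v \<Rightarrow> 'v \<Rightarrow> nat) \<Rightarrow> 'v \<Rightarrow> 'v \<Rightarrow> bool" where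
  "rigidly_marked V m u v \<longleftrightarrow>
     (\<forall>D. is_div V D \<longrightarrow> submodular V m u v D) \<and> rank V m (chip u + chip v) = 0"

text \<open>Vertices of theta(n0,n1,n2) are labelled by pairs of naturals: v_{alpha,i} is
  (0,0) if i = 0, (0,n0) if i = n_alpha, and (alpha,i) otherwise.\<close>

definition th_len :: "nat \<Rightarrow> nat \<Rightarrow> nat \<Rightarrow> nat \<Rightarrow> nat" where
  "th_len n0 n1 n2 \<alpha> = (if \<alpha> = 0 then n0 else if \<alpha> = 1 then n1 else n2)"

definition th_vtx :: "nat \<Rightarrow> nat \<Rightarrow> nat \<Rightarrow> nat \<Rightarrow> nat \<Rightarrow> nat \<times> nat" where
  "th_vtx n0 n1 n2 \<alpha> i =
     (if i = 0 then (0,0) else if i = th_len n0 n1 n2 \<alpha> then (0, n0) else (\<alpha>, i))"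

definition th_V :: "nat \<Rightarrow> nat \<Rightarrow> nat \<Rightarrow> (nat \<times> nat) set" where
  "th_V n0 n1 n2 = {th_vtx n0 n1 n2 \<alpha> i | \<alpha> i. \<alpha> < 3 \<and> i \<le> th_len n0 n1 n2 \<alpha>}"

definition th_mult :: "nat \<Rightarrow> nat \<Rightarrow> nat \<Rightarrow> nat \<times> nat \<Rightarrow> nat \<times> nat \<Rightarrow> nat" where
  "th_mult n0 n1 n2 x y = card {(\<alpha>, i). \<alpha> < 3 \<and> i < th_len n0 n1 n2 \<alpha> \<and>
        {x, y} = {th_vtx n0 n1 n2 \<alpha> i, th_vtx n0 n1 n2 \<alpha> (Suc i)}}"

definition th_bar :: "nat \<Rightarrow> nat \<Rightarrow> nat \<Rightarrow> nat \<times> nat \<Rightarrow> nat \<times> nat" where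
  "th_bar n0 n1 n2 x = (SOME y. \<exists>\<alpha> i. \<alpha> < 3 \<and> i \<le> th_len n0 n1 n2 \<alpha> \<and>
        x = th_vtx n0 n1 n2 \<alpha> i \<and> y = th_vtx n0 n1 n2 \<alpha> (th_len n0 n1 n2 \<alpha> - i))"

end

theory Submission
  imports Defs
begin

text \<open>
  On a theta graph every divisor of degree \<open>d\<close> is equivalent to \<open>d p + \<Sum>\<^sub>\<alpha> c\<^sub>\<alpha> (v\<^sub>\<alpha>\<^sub>1 - p)\<close>,
  with \<open>n\<^sub>\<alpha> (v\<^sub>\<alpha>\<^sub>1 - p) \<sim> q - p\<close> for all three paths; reducing the coefficients shows that every
  divisor of degree at least two is equivalent to an effective one. A maximum principle for
  principal divisors, together with the fact that every cut of the theta graph has at least two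
  edges (three if it separates \<open>p\<close> from \<open>q\<close>), shows that distinct vertices are not equivalent
  and that \<open>p + x \<sim> q + y\<close> forces \<open>x = q\<close>. Hence a divisor of degree two has rank \<open>0\<close> or \<open>1\<close>,
  and rank \<open>1\<close> exactly on the class of \<open>K = p + q \<sim> w + bar w\<close>; with \<open>r(u + v) = 0\<close>, divisors of
  degree \<open>d \<ge> 3\<close> have rank \<open>d - 2\<close>. These values determine \<open>\<Delta>\<close> at \<open>D'\<^sub>t + (\<tau>(t) - t) u\<close> and
  show that it is \<open>1\<close> for the claimed \<open>\<tau>(t)\<close>. Submodularity makes rows and columns of \<open>\<Delta>\<close>
  the increments of monotone \<open>{0, 1}\<close>-valued functions, so each row and each column contains a
  single \<open>1\<close>; this identifies the transmission permutation.
\<close>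

section \<open>Linear equivalence on multigraphs\<close>

definition laplacian :: "'v set \<Rightarrow> ('v \<Rightarrow> 'v \<Rightarrow> nat) \<Rightarrow> 'v \<Rightarrow> 'v \<Rightarrow> int" where
  "laplacian V m w = (\<lambda>x. if x = w then - int (val V m w) else int (m x w))"

definition principal_div :: "'v set \<Rightarrow> ('v \<Rightarrow> 'v \<Rightarrow> nat) \<Rightarrow> ('v \<Rightarrow> int) \<Rightarrow> 'v \<Rightarrow> int" where
  "principal_div V m f = (\<lambda>x. \<Sum>w\<in>V. f w * laplacian V m w x)"

definition scale_div :: "int \<Rightarrow> ('v \<Rightarrow> int) \<Rightarrow> 'v \<Rightarrow> int" where
  "scale_div k A = (\<lambda>x. k * A x)"

lemma scale_div_0 [simp]: "scale_div 0 A = 0"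
  and scale_div_1 [simp]: "scale_div 1 A = A"
  and scale_div_zero [simp]: "scale_div k 0 = 0"
  by (simp_all add: scale_div_def fun_eq_iff)

lemma fire_eq_add_laplacian: "fire V m w D = D + laplacian V m w"
  by (rule ext) (simp add: fire_def laplacian_def)

lemma principal_div_zero: "principal_div V m (\<lambda>_. 0) = 0"
  by (rule ext) (simp add: principal_div_def)

lemma principal_div_add: "principal_div V m (\<lambda>w. f w + g w) = principal_div V m f + principal_div V m g"
  by (rule ext) (simp add: principal_div_def algebra_simps sum.distrib)

lemma principal_div_diff: "principal_div V m (\<lambda>w. f w - g w) = principal_div V m f - principal_div V m g"
  by (rule ext) (simp add: principal_div_def algebra_simps sum_subtractf)

lemma principal_div_scale: "principal_div V m (\<lambda>w. k * f w) = scale_div k (principal_div V m f)"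
  by (rule ext) (simp add: principal_div_def scale_div_def sum_distrib_left algebra_simps)

lemma principal_div_indicator:
  "finite V \<Longrightarrow> w \<in> V \<Longrightarrow> principal_div V m (\<lambda>w'. of_bool (w' = w)) = laplacian V m w"
  by (rule ext) (simp add: principal_div_def if_distrib[where f="\<lambda>c. c * _"] cong: if_cong)

lemma lin_equiv_refl [simp]: "lin_equiv V m D D"
  by (simp add: lin_equiv_def)

lemma lin_equiv_sym: "lin_equiv V m D D' \<Longrightarrow> lin_equiv V m D' D"
  unfolding lin_equiv_def by (rule equivclp_sym)

lemma lin_equiv_trans [trans]: "lin_equiv V m D D' \<Longrightarrow> lin_equiv V m D' D'' \<Longrightarrow> lin_equiv V m D D''"
  unfolding lin_equiv_def by (rule equivclp_trans)

text \<open>Without these, calculations mixing \<open>=\<close> and \<open>lin_equiv\<close> fall back on higher-order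
  substitution rules, which is extremely slow here.\<close>

lemma eq_lin_equiv_trans [trans]: "A = B \<Longrightarrow> lin_equiv V m B C \<Longrightarrow> lin_equiv V m A C"
  and lin_equiv_eq_trans [trans]: "lin_equiv V m A B \<Longrightarrow> B = C \<Longrightarrow> lin_equiv V m A C"
  by simp_all

lemma lin_equiv_add_laplacian: "w \<in> V \<Longrightarrow> lin_equiv V m D (D + laplacian V m w)"
  unfolding lin_equiv_def fire_eq_add_laplacian[symmetric] by auto

lemma lin_equiv_add_nat_scaled_laplacian:
  assumes "w \<in> V" shows "lin_equiv V m D (D + scale_div (int k) (laplacian V m w))"
proof (induction k)
  case (Suc k)
  have "D + scale_div (int (Suc k)) (laplacian V m w) = (D + scale_div (int k) (laplacian V m w)) + laplacian V m w"
    by (simp add: scale_div_def fun_eq_iff algebra_simps)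
  then show ?case
    using Suc lin_equiv_add_laplacian[OF assms] by (metis lin_equiv_trans)
qed (simp add: scale_div_def)

lemma lin_equiv_add_scaled_laplacian:
  assumes "w \<in> V" shows "lin_equiv V m D (D + scale_div k (laplacian V m w))"
proof (cases "k \<ge> 0")
  case True
  then show ?thesis using lin_equiv_add_nat_scaled_laplacian[OF assms, where D=D and k="nat k"] by simp
next
  case False
  let ?E = "D + scale_div k (laplacian V m w)"
  have "?E + scale_div (int (nat (-k))) (laplacian V m w) = D"
    using False by (simp add: scale_div_def fun_eq_iff algebra_simps)
  then show ?thesis
    using lin_equiv_add_nat_scaled_laplacian[OF assms, where D="?E" and k="nat (-k)"] by (metis lin_equiv_sym)
qed

lemma lin_equiv_add_principal_div_on:
  assumes "finite A" "A \<subseteq> V"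
  shows "lin_equiv V m D (D + (\<lambda>x. \<Sum>w\<in>A. f w * laplacian V m w x))"
  using assms
proof (induction A arbitrary: D rule: finite_induct)
  case (insert w A)
  let ?D' = "D + scale_div (f w) (laplacian V m w)"
  have "lin_equiv V m D ?D'"
    using insert by (intro lin_equiv_add_scaled_laplacian) auto
  also have "lin_equiv V m ?D' (?D' + (\<lambda>x. \<Sum>w\<in>A. f w * laplacian V m w x))"
    using insert by blast
  also have "?D' + (\<lambda>x. \<Sum>w\<in>A. f w * laplacian V m w x) = D + (\<lambda>x. \<Sum>w\<in>insert w A. f w * laplacian V m w x)"
    using insert by (simp add: scale_div_def fun_eq_iff algebra_simps)
  finally show ?case .
qed (simp add: plus_fun_def)

lemma lin_equiv_iff_principal:
  assumes "finite V"
  shows "lin_equiv V m D D' \<longleftrightarrow> (\<exists>f. D' = D + principal_div V m f)"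
proof
  assume "lin_equiv V m D D'"
  then show "\<exists>f. D' = D + principal_div V m f"
    unfolding lin_equiv_def
  proof (induction rule: equivclp_induct)
    case base
    show ?case by (rule exI[of _ "\<lambda>_. 0"]) (simp add: principal_div_zero)
  next
    case (step y z)
    then obtain f where f: "y = D + principal_div V m f" by blast
    from step(2) obtain w where "w \<in> V" "z = fire V m w y \<or> y = fire V m w z" by blast
    then have "z = D + principal_div V m (\<lambda>w'. f w' + of_bool (w' = w))
             \<or> z = D + principal_div V m (\<lambda>w'. f w' - of_bool (w' = w))"
      using f assms
      by (auto simp: fire_eq_add_laplacian principal_div_add principal_div_diff
                     principal_div_indicator algebra_simps)
    then show ?case by blast
  qed
next
  assume "\<exists>f. D' = D + principal_div V m f"
  then show "lin_equiv V m D D'"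
    using lin_equiv_add_principal_div_on[OF assms order_refl] by (auto simp: principal_div_def)
qed

lemma int_le_by_naturals:
  fixes a b :: int
  assumes "\<And>k::nat. int k \<le> a \<Longrightarrow> int k \<le> b" "b \<ge> -1"
  shows "a \<le> b"
  using assms(1)[of "nat a"] assms(2) by (cases "a < 0") auto

lemma int_le_succ_by_naturals:
  fixes a b :: int
  assumes "\<And>k::nat. int (Suc k) \<le> b \<Longrightarrow> int k \<le> a" "a \<ge> -1"
  shows "b \<le> a + 1"
  using assms(1)[of "nat (b - 1)"] assms(2) by (cases "b \<le> 0") auto

locale multigraph =
  fixes V :: "'v set" and m :: "'v \<Rightarrow> 'v \<Rightarrow> nat"
  assumes finite_V: "finite V" and V_nonempty: "V \<noteq> {}"
    and m_sym: "m x y = m y x" and m_diag: "m x x = 0" and m_outside: "x \<notin> V \<Longrightarrow> m x y = 0"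
begin

abbreviation lequiv (infix "\<approx>" 50) where "A \<approx> B \<equiv> lin_equiv V m A B"

lemma lin_equiv_iff: "A \<approx> B \<longleftrightarrow> (\<exists>f. B = A + principal_div V m f)"
  by (rule lin_equiv_iff_principal[OF finite_V])

lemma lin_equiv_add: "A \<approx> B \<Longrightarrow> C \<approx> D \<Longrightarrow> A + C \<approx> B + D"
proof -
  assume "A \<approx> B" "C \<approx> D"
  then obtain f g where "B = A + principal_div V m f" "D = C + principal_div V m g"
    by (auto simp: lin_equiv_iff)
  then have "B + D = (A + C) + principal_div V m (\<lambda>w. f w + g w)"
    by (simp add: principal_div_add algebra_simps)
  then show ?thesis by (auto simp: lin_equiv_iff)
qed

lemma lin_equiv_diff: "A \<approx> B \<Longrightarrow> C \<approx> D \<Longrightarrow> A - C \<approx> B - D"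
proof -
  assume "A \<approx> B" "C \<approx> D"
  then obtain f g where "B = A + principal_div V m f" "D = C + principal_div V m g"
    by (auto simp: lin_equiv_iff)
  then have "B - D = (A - C) + principal_div V m (\<lambda>w. f w - g w)"
    by (simp add: principal_div_diff algebra_simps)
  then show ?thesis by (auto simp: lin_equiv_iff)
qed

lemma lin_equiv_scale: "A \<approx> B \<Longrightarrow> scale_div k A \<approx> scale_div k B"
proof -
  assume "A \<approx> B"
  then obtain f where "B = A + principal_div V m f" by (auto simp: lin_equiv_iff)
  then have "scale_div k B = scale_div k A + principal_div V m (\<lambda>w. k * f w)"
    by (simp add: principal_div_scale) (simp add: scale_div_def fun_eq_iff algebra_simps)
  then show ?thesis by (auto simp: lin_equiv_iff)
qed

lemma lin_equiv_add_if_diff: "A - B \<approx> C \<Longrightarrow> A \<approx> B + C"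
  using lin_equiv_add[of "A - B" C B B] by (simp add: add.commute)

lemma lin_equiv_diff_if_add: "A \<approx> B + C \<Longrightarrow> A - B \<approx> C"
  using lin_equiv_diff[of A "B + C" B B] by simp

lemma lin_equiv_iff_diff: "A \<approx> B \<longleftrightarrow> A - B \<approx> 0"
  using lin_equiv_add_if_diff[of A B 0] lin_equiv_diff_if_add[of A B 0] by auto

lemma deg_add [simp]: "deg V (A + B) = deg V A + deg V B"
  by (simp add: deg_def sum.distrib)

lemma deg_diff [simp]: "deg V (A - B) = deg V A - deg V B"
  by (simp add: deg_def sum_subtractf)

lemma deg_scale [simp]: "deg V (scale_div k A) = k * deg V A"
  by (simp add: deg_def scale_div_def sum_distrib_left)

lemma deg_uminus [simp]: "deg V (- A) = - deg V A"
  by (simp add: deg_def sum_negf)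

lemma deg_zero [simp]: "deg V 0 = 0"
  by (simp add: deg_def)

lemma deg_chip [simp]: "x \<in> V \<Longrightarrow> deg V (chip x) = 1"
  using finite_V by (simp add: deg_def chip_def)

lemma deg_laplacian: "w \<in> V \<Longrightarrow> deg V (laplacian V m w) = 0"
proof -
  assume w: "w \<in> V"
  have "deg V (laplacian V m w) = laplacian V m w w + (\<Sum>x\<in>V-{w}. laplacian V m w x)"
    unfolding deg_def using w finite_V by (simp add: sum.remove)
  also have "(\<Sum>x\<in>V-{w}. laplacian V m w x) = (\<Sum>x\<in>V. int (m w x))"
    using w finite_V by (simp add: laplacian_def sum.remove m_diag m_sym)
  also have "laplacian V m w w = - (\<Sum>x\<in>V. int (m w x))"
    by (simp add: laplacian_def val_def)
  finally show ?thesis by simp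
qed

lemma deg_principal_div: "deg V (principal_div V m f) = 0"
proof -
  have "deg V (principal_div V m f) = (\<Sum>w\<in>V. f w * deg V (laplacian V m w))"
    unfolding deg_def principal_div_def by (subst sum.swap) (simp add: sum_distrib_left)
  then show ?thesis by (simp add: deg_laplacian)
qed

lemma lin_equiv_deg: "A \<approx> B \<Longrightarrow> deg V A = deg V B"
  by (auto simp: lin_equiv_iff deg_principal_div)

lemma is_div_add [simp]: "is_div V A \<Longrightarrow> is_div V B \<Longrightarrow> is_div V (A + B)"
  and is_div_diff [simp]: "is_div V A \<Longrightarrow> is_div V B \<Longrightarrow> is_div V (A - B)"
  and is_div_scale [simp]: "is_div V A \<Longrightarrow> is_div V (scale_div k A)"
  and is_div_chip [simp]: "x \<in> V \<Longrightarrow> is_div V (chip x)"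
  and is_div_zero [simp]: "is_div V 0"
  by (simp_all add: is_div_def scale_div_def chip_def)

lemma is_div_laplacian: "is_div V (laplacian V m w)"
  unfolding is_div_def laplacian_def val_def using m_outside by auto

lemma div_eq_if_eq_off:
  assumes "is_div V A" "is_div V B" "deg V A = deg V B" "w \<in> V"
    and off: "\<And>x. x \<in> V \<Longrightarrow> x \<noteq> w \<Longrightarrow> A x = B x"
  shows "A = B"
proof -
  have "(\<Sum>y\<in>V-{w}. A y) = (\<Sum>y\<in>V-{w}. B y)" by (rule sum.cong) (auto intro: off)
  then have "A w = B w"
    using assms(3,4) finite_V unfolding deg_def by (simp add: sum.remove)
  then show ?thesis
    using assms(1,2) off unfolding is_div_def by (metis ext)
qed

lemma effective_add [simp]: "effective A \<Longrightarrow> effective B \<Longrightarrow> effective (A + B)"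
  and effective_chip [simp]: "effective (chip x)"
  and effective_zero [simp]: "effective 0"
  and effective_scale [simp]: "k \<ge> 0 \<Longrightarrow> effective A \<Longrightarrow> effective (scale_div k A)"
  by (simp_all add: effective_def chip_def scale_div_def)

lemma deg_nonneg_if_effective: "effective E \<Longrightarrow> deg V E \<ge> 0"
  unfolding deg_def effective_def by (simp add: sum_nonneg)

lemma effective_deg_0: "is_div V E \<Longrightarrow> effective E \<Longrightarrow> deg V E = 0 \<Longrightarrow> E = 0"
  using finite_V unfolding is_div_def effective_def deg_def
  by (auto simp: fun_eq_iff sum_nonneg_eq_0_iff)

lemma effective_deg_1:
  assumes "is_div V E" "effective E" "deg V E = 1" shows "\<exists>y\<in>V. E = chip y"
proof -
  have "\<exists>y\<in>V. E y \<ge> 1"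
  proof (rule ccontr)
    assume "\<not> ?thesis"
    then have "\<forall>y\<in>V. E y = 0" using assms(2) unfolding effective_def
      by (metis linorder_not_le order.antisym zle_add1_eq_le add.left_neutral)
    then show False using assms(3) by (simp add: deg_def)
  qed
  then obtain y where y: "y \<in> V" "E y \<ge> 1" by blast
  have "E - chip y = 0"
  proof (rule effective_deg_0)
    show "effective (E - chip y)" using assms(2) y by (auto simp: effective_def chip_def)
  qed (use assms y in simp_all)
  then show ?thesis using y by (auto simp: algebra_simps)
qed

lemma equiv_eff_cong: "A \<approx> B \<Longrightarrow> equiv_eff V m A \<longleftrightarrow> equiv_eff V m B"
  unfolding equiv_eff_def by (meson lin_equiv_sym lin_equiv_trans)

lemma equiv_eff_I: "A \<approx> F \<Longrightarrow> is_div V F \<Longrightarrow> effective F \<Longrightarrow> equiv_eff V m A"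
  unfolding equiv_eff_def by blast

lemma not_equiv_eff_if_deg_neg: "deg V A < 0 \<Longrightarrow> \<not> equiv_eff V m A"
  unfolding equiv_eff_def using lin_equiv_deg deg_nonneg_if_effective by fastforce

lemma equiv_eff_add_effective:
  assumes "equiv_eff V m A" "is_div V G" "effective G" shows "equiv_eff V m (A + G)"
proof -
  obtain F where F: "is_div V F" "effective F" "A \<approx> F"
    using assms(1) unfolding equiv_eff_def by blast
  have "A + G \<approx> F + G" using lin_equiv_add[OF F(3) lin_equiv_refl] .
  then show ?thesis using F assms by (intro equiv_eff_I[of _ "F + G"]) auto
qed

lemma equiv_eff_deg_0_iff: "deg V A = 0 \<Longrightarrow> equiv_eff V m A \<longleftrightarrow> A \<approx> 0"
  unfolding equiv_eff_def using lin_equiv_deg effective_deg_0 by (metis is_div_zero effective_zero)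

lemma equiv_eff_deg_1_iff: "deg V A = 1 \<Longrightarrow> equiv_eff V m A \<longleftrightarrow> (\<exists>y\<in>V. A \<approx> chip y)"
  unfolding equiv_eff_def using lin_equiv_deg effective_deg_1
  by (metis is_div_chip effective_chip)

section \<open>Rank\<close>

definition rank_at_least :: "('v \<Rightarrow> int) \<Rightarrow> nat \<Rightarrow> bool" where
  "rank_at_least D r \<longleftrightarrow>
     (\<forall>E. is_div V E \<and> effective E \<and> deg V E = int r \<longrightarrow> equiv_eff V m (D - E))"

lemma rank_at_leastD:
  "rank_at_least D r \<Longrightarrow> is_div V E \<Longrightarrow> effective E \<Longrightarrow> deg V E = int r \<Longrightarrow> equiv_eff V m (D - E)"
  unfolding rank_at_least_def by blast

lemma rank_at_least_0_iff: "rank_at_least D 0 \<longleftrightarrow> equiv_eff V m D"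
proof
  assume "rank_at_least D 0"
  then show "equiv_eff V m D" using rank_at_leastD[of D 0 0] by simp
next
  assume "equiv_eff V m D"
  then show "rank_at_least D 0"
    unfolding rank_at_least_def by (metis diff_zero effective_deg_0 of_nat_0)
qed

lemma rank_at_least_chip: "rank_at_least D 1 \<Longrightarrow> x \<in> V \<Longrightarrow> equiv_eff V m (D - chip x)"
  by (erule rank_at_leastD) simp_all

lemma rank_at_least_mono: "rank_at_least D k \<Longrightarrow> j \<le> k \<Longrightarrow> rank_at_least D j"
  unfolding rank_at_least_def
proof (intro allI impI)
  fix E assume Dk: "\<forall>E. is_div V E \<and> effective E \<and> deg V E = int k \<longrightarrow> equiv_eff V m (D - E)"
    and jk: "j \<le> k" and E: "is_div V E \<and> effective E \<and> deg V E = int j"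
  obtain x where x: "x \<in> V" using V_nonempty by blast
  let ?F = "scale_div (int (k - j)) (chip x)"
  have "equiv_eff V m (D - (E + ?F))"
    using Dk E x jk by (simp add: of_nat_diff)
  then have "equiv_eff V m (D - (E + ?F) + ?F)"
    using x by (intro equiv_eff_add_effective) auto
  then show "equiv_eff V m (D - E)" by (simp add: algebra_simps)
qed

lemma rank_at_least_le_deg: "rank_at_least D k \<Longrightarrow> int k \<le> deg V D"
proof -
  assume Dk: "rank_at_least D k"
  obtain x where x: "x \<in> V" using V_nonempty by blast
  then have "equiv_eff V m (D - scale_div (int k) (chip x))"
    by (intro rank_at_leastD[OF Dk]) simp_all
  then have "\<not> deg V (D - scale_div (int k) (chip x)) < 0"
    using not_equiv_eff_if_deg_neg by blast
  then show ?thesis using x by simp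
qed

lemma rank_ge_iff: "int k \<le> rank V m D \<longleftrightarrow> rank_at_least D k"
proof (cases "equiv_eff V m D")
  case False
  then show ?thesis
    using rank_at_least_mono[of D k 0] rank_at_least_0_iff by (auto simp: rank_def)
next
  case True
  have bounded: "rank_at_least D r \<Longrightarrow> r \<le> nat (deg V D)" for r
    using rank_at_least_le_deg by fastforce
  have rank: "rank V m D = int (GREATEST r. rank_at_least D r)"
    using True unfolding rank_def rank_at_least_def by simp
  have "rank_at_least D (GREATEST r. rank_at_least D r)"
    using GreatestI_nat[where P="rank_at_least D", OF iffD2[OF rank_at_least_0_iff True] bounded] .
  moreover have "rank_at_least D k \<Longrightarrow> k \<le> (GREATEST r. rank_at_least D r)"
    by (rule Greatest_le_nat[where P="rank_at_least D", OF _ bounded])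
  ultimately show ?thesis
    unfolding rank of_nat_le_iff using rank_at_least_mono by blast
qed

lemma rank_ge_minus1: "rank V m D \<ge> -1"
  by (simp add: rank_def)

lemma rank_eq_minus1_iff: "rank V m D = -1 \<longleftrightarrow> \<not> equiv_eff V m D"
  using rank_ge_iff[of 0 D] rank_at_least_0_iff by (auto simp: rank_def)

lemma rank_nonneg_iff: "0 \<le> rank V m D \<longleftrightarrow> equiv_eff V m D"
  using rank_ge_iff[of 0 D] rank_at_least_0_iff by simp

lemma rank_at_least_cong: "A \<approx> B \<Longrightarrow> rank_at_least A k \<longleftrightarrow> rank_at_least B k"
  unfolding rank_at_least_def
  using equiv_eff_cong[OF lin_equiv_diff[OF _ lin_equiv_refl]] by blast

lemma rank_cong: "A \<approx> B \<Longrightarrow> rank V m A = rank V m B"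
proof -
  assume AB: "A \<approx> B"
  have "int k \<le> rank V m A \<longleftrightarrow> int k \<le> rank V m B" for k
    using rank_at_least_cong[OF AB] by (simp add: rank_ge_iff)
  then show ?thesis
    using int_le_by_naturals[OF _ rank_ge_minus1] by (meson order.antisym)
qed

lemma rank_le_add_chip: "x \<in> V \<Longrightarrow> rank V m D \<le> rank V m (D + chip x)"
proof (rule int_le_by_naturals[OF _ rank_ge_minus1])
  fix k assume x: "x \<in> V" and "int k \<le> rank V m D"
  then have "rank_at_least D k" by (simp add: rank_ge_iff)
  then have "rank_at_least (D + chip x) k"
    unfolding rank_at_least_def using equiv_eff_add_effective[of _ "chip x"] x
    by (simp add: diff_add_eq[symmetric])
  then show "int k \<le> rank V m (D + chip x)" by (simp add: rank_ge_iff)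
qed

lemma rank_add_chip_le: "x \<in> V \<Longrightarrow> rank V m (D + chip x) \<le> rank V m D + 1"
proof (rule int_le_succ_by_naturals[OF _ rank_ge_minus1])
  fix k assume x: "x \<in> V" and "int (Suc k) \<le> rank V m (D + chip x)"
  then have "rank_at_least (D + chip x) (Suc k)" using rank_ge_iff by blast
  then have "rank_at_least D k"
    unfolding rank_at_least_def
  proof (intro allI impI)
    fix E assume "is_div V E \<and> effective E \<and> deg V E = int k"
    then have "equiv_eff V m (D + chip x - (E + chip x))"
      using x by (intro rank_at_leastD[OF \<open>rank_at_least (D + chip x) (Suc k)\<close>]) auto
    then show "equiv_eff V m (D - E)" by simp
  qed
  then show "int k \<le> rank V m D" by (simp add: rank_ge_iff)
qed

lemma rank_diff_chip_bounds:
  "x \<in> V \<Longrightarrow> 0 \<le> rank V m A - rank V m (A - chip x) \<and> rank V m A - rank V m (A - chip x) \<le> 1"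
  using rank_le_add_chip[of x "A - chip x"] rank_add_chip_le[of x "A - chip x"] by simp

lemma rank_add_scaled_chip_le:
  "x \<in> V \<Longrightarrow> rank V m (A + scale_div (int n) (chip x)) \<le> rank V m A + int n"
proof (induction n)
  case (Suc n)
  have "A + scale_div (int (Suc n)) (chip x) = (A + scale_div (int n) (chip x)) + chip x"
    by (simp add: fun_eq_iff scale_div_def algebra_simps)
  then have "rank V m (A + scale_div (int (Suc n)) (chip x))
      \<le> rank V m (A + scale_div (int n) (chip x)) + 1"
    using rank_add_chip_le[OF Suc.prems] by presburger
  then show ?case using Suc by linarith
qed simp

lemma rank_deg_neg: "deg V A < 0 \<Longrightarrow> rank V m A = -1"
  using rank_eq_minus1_iff not_equiv_eff_if_deg_neg by blast

lemma rank_deg_0: "deg V A = 0 \<Longrightarrow> rank V m A = (if A \<approx> 0 then 0 else -1)"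
proof -
  assume d: "deg V A = 0"
  obtain x where x: "x \<in> V" using V_nonempty by blast
  have "deg V (A - chip x) < 0" using x d by simp
  then have "\<not> rank_at_least A 1"
    using rank_at_least_chip[of A x] x not_equiv_eff_if_deg_neg by blast
  then have "\<not> int 1 \<le> rank V m A" using rank_ge_iff by blast
  then show ?thesis
    using rank_nonneg_iff[of A] equiv_eff_deg_0_iff[OF d] rank_ge_minus1[of A] by auto
qed

section \<open>The maximum principle\<close>

definition cut_size :: "'v set \<Rightarrow> int" where
  "cut_size S = (\<Sum>x\<in>S. \<Sum>y\<in>V-S. int (m x y))"

lemma principal_div_apply:
  assumes "x \<in> V" shows "principal_div V m f x = (\<Sum>w\<in>V. int (m x w) * (f w - f x))"
proof -
  have "principal_div V m f x = f x * laplacian V m x x + (\<Sum>w\<in>V-{x}. f w * laplacian V m w x)"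
    unfolding principal_div_def using assms finite_V by (simp add: sum.remove)
  also have "(\<Sum>w\<in>V-{x}. f w * laplacian V m w x) = (\<Sum>w\<in>V-{x}. int (m x w) * f w)"
    by (rule sum.cong) (auto simp: laplacian_def)
  also have "laplacian V m x x = - (\<Sum>w\<in>V-{x}. int (m x w))"
    using assms finite_V by (simp add: laplacian_def val_def sum.remove m_diag)
  also have "f x * - (\<Sum>w\<in>V-{x}. int (m x w)) + (\<Sum>w\<in>V-{x}. int (m x w) * f w)
      = (\<Sum>w\<in>V-{x}. int (m x w) * (f w - f x))"
    by (simp add: algebra_simps sum_subtractf sum_distrib_left)
  also have "\<dots> = (\<Sum>w\<in>V. int (m x w) * (f w - f x))"
    using assms finite_V by (simp add: sum.remove m_diag)
  finally show ?thesis .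
qed

lemma principal_div_at_max:
  assumes x: "x \<in> V" and max: "\<forall>w\<in>V. f w \<le> f x"
  shows "principal_div V m f x \<le> - (\<Sum>w\<in>{w\<in>V. f w \<noteq> f x}. int (m x w))"
proof -
  have "principal_div V m f x \<le> (\<Sum>w\<in>V. if f w \<noteq> f x then - int (m x w) else 0)"
    unfolding principal_div_apply[OF x]
  proof (rule sum_mono)
    fix w assume "w \<in> V"
    then have "f w \<noteq> f x \<Longrightarrow> int (m x w) * (f w - f x) \<le> int (m x w) * (-1)"
      using max by (intro mult_left_mono) fastforce+
    then show "int (m x w) * (f w - f x) \<le> (if f w \<noteq> f x then - int (m x w) else 0)"
      by auto
  qed
  also have "\<dots> = - (\<Sum>w\<in>{w\<in>V. f w \<noteq> f x}. int (m x w))"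
    using finite_V by (simp add: sum.inter_filter[symmetric] sum_negf)
  finally show ?thesis .
qed

text \<open>On the set where its potential is maximal, a nonzero principal divisor loses at least
  one chip per cut edge.\<close>

lemma principal_div_zero_or_cut:
  assumes "0 \<approx> Z"
  shows "(\<forall>x\<in>V. Z x = 0) \<or> (\<exists>S. S \<subseteq> V \<and> S \<noteq> {} \<and> S \<noteq> V \<and> (\<Sum>x\<in>S. Z x) \<le> - cut_size S)"
proof -
  obtain f where Z: "Z = principal_div V m f" using assms by (auto simp: lin_equiv_iff)
  define M where "M = Max (f ` V)"
  define S where "S = {x\<in>V. f x = M}"
  have le_M: "\<forall>w\<in>V. f w \<le> M" unfolding M_def using finite_V by simp
  have "M \<in> f ` V" unfolding M_def using finite_V V_nonempty by simp
  then have "S \<noteq> {}" unfolding S_def by auto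
  show ?thesis
  proof (cases "S = V")
    case True
    then have "\<forall>w\<in>V. f w = M" unfolding S_def by auto
    then show ?thesis by (simp add: Z principal_div_apply)
  next
    case False
    have "Z x \<le> - (\<Sum>y\<in>V-S. int (m x y))" if "x \<in> S" for x
    proof -
      have "x \<in> V" "f x = M" using that unfolding S_def by auto
      moreover have "{w\<in>V. f w \<noteq> f x} = V - S" using \<open>f x = M\<close> unfolding S_def by auto
      ultimately show ?thesis using principal_div_at_max[of x f] le_M Z by simp
    qed
    then have "(\<Sum>x\<in>S. Z x) \<le> (\<Sum>x\<in>S. - (\<Sum>y\<in>V-S. int (m x y)))"
      by (rule sum_mono)
    then have "(\<Sum>x\<in>S. Z x) \<le> - cut_size S"
      unfolding cut_size_def by (simp add: sum_negf)
    moreover have "S \<subseteq> V" unfolding S_def by auto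
    ultimately show ?thesis using \<open>S \<noteq> {}\<close> False by blast
  qed
qed

end

section \<open>Theta graphs\<close>

lemma less_3_cases: "(\<alpha>::nat) < 3 \<Longrightarrow> \<alpha> = 0 \<or> \<alpha> = 1 \<or> \<alpha> = 2"
  by arith

lemma sum_less_3: "(\<Sum>\<alpha><3. f \<alpha>) = f 0 + f 1 + (f (2::nat) :: 'a :: comm_monoid_add)"
  by (simp add: numeral_3_eq_3 numeral_2_eq_2 lessThan_Suc add_ac)

locale theta_graph =
  fixes n0 n1 n2 :: nat
  assumes n0: "n0 \<ge> 1" and n1: "n1 \<ge> 1" and n2: "n2 \<ge> 1"
begin

abbreviation "len \<equiv> th_len n0 n1 n2"
abbreviation "vtx \<equiv> th_vtx n0 n1 n2"
abbreviation "VV \<equiv> th_V n0 n1 n2"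
abbreviation "mm \<equiv> th_mult n0 n1 n2"
abbreviation "bar \<equiv> th_bar n0 n1 n2"

definition p :: "nat \<times> nat" where "p = (0, 0)"
definition q :: "nat \<times> nat" where "q = (0, n0)"

lemma len_pos: "len \<alpha> \<ge> 1"
  using n0 n1 n2 by (simp add: th_len_def)

lemma len_0: "len 0 = n0"
  by (simp add: th_len_def)

lemma vtx_0 [simp]: "vtx \<alpha> 0 = p"
  by (simp add: th_vtx_def p_def)

lemma vtx_len [simp]: "vtx \<alpha> (len \<alpha>) = q"
  using len_pos[of \<alpha>] by (simp add: th_vtx_def q_def)

lemma p_ne_q [simp]: "p \<noteq> q" "q \<noteq> p"
  using n0 by (auto simp: p_def q_def)

lemma vtx_eq_p_iff: "i \<le> len \<alpha> \<Longrightarrow> vtx \<alpha> i = p \<longleftrightarrow> i = 0"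
  using n0 by (auto simp: th_vtx_def p_def q_def)

lemma vtx_eq_q_iff: "i \<le> len \<alpha> \<Longrightarrow> vtx \<alpha> i = q \<longleftrightarrow> i = len \<alpha>"
  using n0 len_0 len_pos[of \<alpha>] by (auto simp: th_vtx_def p_def q_def)

lemma vtx_eq_interior_iff:
  "i \<le> len \<alpha> \<Longrightarrow> 0 < j \<Longrightarrow> j < len \<beta> \<Longrightarrow> vtx \<alpha> i = vtx \<beta> j \<longleftrightarrow> \<alpha> = \<beta> \<and> i = j"
  by (auto simp: th_vtx_def th_len_def)

lemma vtx_inj_iff: "i \<le> len \<alpha> \<Longrightarrow> j \<le> len \<alpha> \<Longrightarrow> vtx \<alpha> i = vtx \<alpha> j \<longleftrightarrow> i = j"
  using vtx_eq_interior_iff[of i \<alpha> j \<alpha>] vtx_eq_p_iff[of i \<alpha>] vtx_eq_q_iff[of i \<alpha>]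
  by (cases "j = 0 \<or> j = len \<alpha>") auto

lemma vtx_in_V: "\<alpha> < 3 \<Longrightarrow> i \<le> len \<alpha> \<Longrightarrow> vtx \<alpha> i \<in> VV"
  by (auto simp: th_V_def)

lemma V_cases:
  assumes "x \<in> VV" obtains \<alpha> i where "\<alpha> < 3" "i \<le> len \<alpha>" "x = vtx \<alpha> i"
  using assms by (auto simp: th_V_def)

lemma p_in_V [simp]: "p \<in> VV" and q_in_V [simp]: "q \<in> VV"
  using vtx_in_V[of 0 0] vtx_in_V[of 0 "len 0"] by simp_all

lemma finite_th_V: "finite VV"
proof -
  have "VV = (\<lambda>(\<alpha>, i). vtx \<alpha> i) ` (SIGMA \<alpha>:{..<3}. {..len \<alpha>})"
    by (auto simp: th_V_def)
  then show ?thesis by simp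
qed

definition edges :: "(nat \<times> nat) set" where
  "edges = (SIGMA \<alpha>:{..<3}. {..<len \<alpha>})"

definition tail :: "nat \<times> nat \<Rightarrow> nat \<times> nat" where
  "tail e = vtx (fst e) (snd e)"

definition head :: "nat \<times> nat \<Rightarrow> nat \<times> nat" where
  "head e = vtx (fst e) (Suc (snd e))"

lemma finite_edges: "finite edges"
  by (simp add: edges_def)

lemma tail_in_V: "e \<in> edges \<Longrightarrow> tail e \<in> VV"
  and head_in_V: "e \<in> edges \<Longrightarrow> head e \<in> VV"
  by (auto simp: edges_def tail_def head_def intro: vtx_in_V)

lemma tail_ne_head: "e \<in> edges \<Longrightarrow> tail e \<noteq> head e"
  by (auto simp: edges_def tail_def head_def vtx_inj_iff)

lemma int_th_mult:
  "int (mm x y) = (\<Sum>e\<in>edges. of_bool (x = tail e \<and> y = head e) + of_bool (x = head e \<and> y = tail e))"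
proof -
  have "{(\<alpha>, i). \<alpha> < 3 \<and> i < len \<alpha> \<and> {x, y} = {vtx \<alpha> i, vtx \<alpha> (Suc i)}}
      = edges \<inter> {e. {x, y} = {tail e, head e}}"
    unfolding edges_def tail_def head_def by (simp add: set_eq_iff split_beta)
  then have "mm x y = card (edges \<inter> {e. {x, y} = {tail e, head e}})"
    by (simp add: th_mult_def)
  also have "int \<dots> = (\<Sum>e\<in>edges. of_bool ({x, y} = {tail e, head e}))"
    using finite_edges by (simp add: sum.inter_filter[symmetric] Int_def)
  also have "\<dots> = (\<Sum>e\<in>edges. of_bool (x = tail e \<and> y = head e) + of_bool (x = head e \<and> y = tail e))"
    using tail_ne_head by (intro sum.cong) (auto simp: doubleton_eq_iff)
  finally show ?thesis .
qed

lemma int_th_mult_neighbours: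
  "int (mm x w) = (\<Sum>e\<in>{e\<in>edges. head e = w}. chip (tail e) x) + (\<Sum>e\<in>{e\<in>edges. tail e = w}. chip (head e) x)"
proof -
  have neighbours: "(\<Sum>e\<in>{e\<in>edges. f e = w}. chip (g e) x) = (\<Sum>e\<in>edges. of_bool (x = g e \<and> w = f e))"
    for f g :: "nat \<times> nat \<Rightarrow> nat \<times> nat"
    by (simp only: sum.inter_filter[OF finite_edges]) (rule sum.cong, auto simp: chip_def)
  show ?thesis
    unfolding int_th_mult sum.distrib neighbours by simp
qed

end

sublocale theta_graph \<subseteq> multigraph "th_V n0 n1 n2" "th_mult n0 n1 n2"
proof
  show "finite VV" by (rule finite_th_V)
  show "VV \<noteq> {}" using p_in_V by blast
  show "mm x y = mm y x" for x y
    unfolding th_mult_def by (simp add: insert_commute)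
  show "mm x x = 0" for x
  proof -
    have "int (mm x x) = 0"
      unfolding int_th_mult by (intro sum.neutral) (force dest: tail_ne_head)
    then show ?thesis by simp
  qed
  show "mm x y = 0" if "x \<notin> VV" for x y
  proof -
    have "x \<noteq> tail e \<and> x \<noteq> head e" if "e \<in> edges" for e
      using \<open>x \<notin> VV\<close> tail_in_V[OF that] head_in_V[OF that] by blast
    then have "int (mm x y) = 0"
      unfolding int_th_mult by (intro sum.neutral) simp
    then show ?thesis by simp
  qed
qed

context theta_graph
begin

text \<open>The infix syntax of locale \<open>multigraph\<close> does not survive the instantiation with
  \<open>th_V n0 n1 n2\<close>.\<close>

abbreviation th_lequiv (infix "\<approx>" 50) where "A \<approx> B \<equiv> lin_equiv VV mm A B"

lemma laplacian_apply_off: "x \<noteq> w \<Longrightarrow> laplacian VV mm w x = int (mm x w)"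
  by (simp add: laplacian_def)

lemma edges_into_p: "{e\<in>edges. head e = p} = {}"
  by (auto simp: edges_def head_def vtx_eq_p_iff)

lemma edges_out_of_p: "{e\<in>edges. tail e = p} = (\<lambda>\<alpha>. (\<alpha>, 0)) ` {..<3}"
proof -
  have "tail (\<alpha>, i) = p \<longleftrightarrow> i = 0" if "(\<alpha>, i) \<in> edges" for \<alpha> i
    using that by (simp add: edges_def tail_def vtx_eq_p_iff)
  moreover have "(\<alpha>, 0) \<in> edges" if "\<alpha> < 3" for \<alpha>
    using that len_pos[of \<alpha>] by (simp add: edges_def)
  ultimately show ?thesis by (auto simp: edges_def)
qed

lemma edges_into_interior:
  "\<alpha> < 3 \<Longrightarrow> 0 < i \<Longrightarrow> i < len \<alpha> \<Longrightarrow> {e\<in>edges. head e = vtx \<alpha> i} = {(\<alpha>, i - 1)}"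
  by (auto simp: edges_def head_def vtx_eq_interior_iff)

lemma edges_out_of_interior:
  "\<alpha> < 3 \<Longrightarrow> 0 < i \<Longrightarrow> i < len \<alpha> \<Longrightarrow> {e\<in>edges. tail e = vtx \<alpha> i} = {(\<alpha>, i)}"
  by (auto simp: edges_def tail_def vtx_eq_interior_iff)

definition step :: "nat \<Rightarrow> nat \<times> nat \<Rightarrow> int" where
  "step \<alpha> = chip (vtx \<alpha> 1) - chip p"

lemma vtx_1_in_V: "\<alpha> < 3 \<Longrightarrow> vtx \<alpha> 1 \<in> VV"
  using vtx_in_V len_pos by auto

lemma is_div_step: "\<alpha> < 3 \<Longrightarrow> is_div VV (step \<alpha>)"
  and deg_step: "\<alpha> < 3 \<Longrightarrow> deg VV (step \<alpha>) = 0"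
  using vtx_1_in_V by (simp_all add: step_def)

lemma laplacian_p: "laplacian VV mm p = step 0 + step 1 + step 2"
proof (rule div_eq_if_eq_off[OF is_div_laplacian _ _ p_in_V])
  show "is_div VV (step 0 + step 1 + step 2)"
    using is_div_step by simp
  show "deg VV (laplacian VV mm p) = deg VV (step 0 + step 1 + step 2)"
    using deg_laplacian[OF p_in_V] deg_step by simp
  fix x assume "x \<noteq> p"
  have "int (mm x p) = (\<Sum>\<alpha><3. chip (vtx \<alpha> 1) x)"
    unfolding int_th_mult_neighbours edges_into_p edges_out_of_p
    by (simp add: sum.reindex inj_on_def head_def)
  then show "laplacian VV mm p x = (step 0 + step 1 + step 2) x"
    using \<open>x \<noteq> p\<close> by (simp add: laplacian_apply_off step_def sum_less_3 chip_def)
qed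

lemma laplacian_interior:
  assumes "\<alpha> < 3" "0 < i" "i < len \<alpha>"
  shows "laplacian VV mm (vtx \<alpha> i)
           = chip (vtx \<alpha> (i - 1)) + chip (vtx \<alpha> (Suc i)) - scale_div 2 (chip (vtx \<alpha> i))"
    (is "_ = ?L")
proof (rule div_eq_if_eq_off[OF is_div_laplacian _ _ vtx_in_V])
  have nbrs: "vtx \<alpha> (i - 1) \<in> VV" "vtx \<alpha> (Suc i) \<in> VV" "vtx \<alpha> i \<in> VV"
    using assms vtx_in_V by auto
  then show "is_div VV ?L" by simp
  show "deg VV (laplacian VV mm (vtx \<alpha> i)) = deg VV ?L"
    using deg_laplacian nbrs by simp
  fix x assume "x \<noteq> vtx \<alpha> i"
  have "int (mm x (vtx \<alpha> i)) = chip (vtx \<alpha> (i - 1)) x + chip (vtx \<alpha> (Suc i)) x"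
    unfolding int_th_mult_neighbours edges_into_interior[OF assms] edges_out_of_interior[OF assms]
    using assms by (simp add: head_def tail_def)
  then show "laplacian VV mm (vtx \<alpha> i) x = ?L x"
    using \<open>x \<noteq> vtx \<alpha> i\<close> by (simp add: laplacian_apply_off scale_div_def chip_def)
qed (use assms in auto)

lemma steps_sum_equiv_0: "step 0 + step 1 + step 2 \<approx> 0"
  using lin_equiv_add_laplacian[OF p_in_V, of mm 0] laplacian_p by (simp add: lin_equiv_sym)

text \<open>Firing an interior vertex shows that the chips along a path form an arithmetic progression.\<close>

lemma chip_vtx_equiv:
  assumes "\<alpha> < 3" "i \<le> len \<alpha>"
  shows "chip (vtx \<alpha> i) \<approx> chip p + scale_div (int i) (step \<alpha>)"
proof -
  have "Suc i \<le> len \<alpha> \<Longrightarrow> chip (vtx \<alpha> i) \<approx> chip p + scale_div (int i) (step \<alpha>)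
     \<and> chip (vtx \<alpha> (Suc i)) \<approx> chip p + scale_div (int (Suc i)) (step \<alpha>)" for i
  proof (induction i)
    case 0
    show ?case by (simp add: step_def)
  next
    case (Suc i)
    note IH = Suc.IH[OF Suc_leD[OF Suc.prems], THEN conjunct1] Suc.IH[OF Suc_leD[OF Suc.prems], THEN conjunct2]
    have "chip (vtx \<alpha> (Suc (Suc i)))
        = laplacian VV mm (vtx \<alpha> (Suc i)) - chip (vtx \<alpha> i) + scale_div 2 (chip (vtx \<alpha> (Suc i)))"
      using laplacian_interior[of \<alpha> "Suc i"] assms(1) Suc.prems
      by (simp add: fun_eq_iff scale_div_def)
    also have "\<dots> \<approx> 0 - (chip p + scale_div (int i) (step \<alpha>))
                     + scale_div 2 (chip p + scale_div (int (Suc i)) (step \<alpha>))"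
      using lin_equiv_add_laplacian[of "vtx \<alpha> (Suc i)" VV mm 0] vtx_in_V[OF assms(1)] Suc.prems
      by (intro lin_equiv_add lin_equiv_diff lin_equiv_scale IH) (auto simp: lin_equiv_sym)
    also have "\<dots> = chip p + scale_div (int (Suc (Suc i))) (step \<alpha>)"
      by (simp add: fun_eq_iff scale_div_def algebra_simps)
    finally show ?case using IH(2) by blast
  qed
  then show ?thesis using assms by (cases i) auto
qed

lemma th_bar_vtx:
  assumes "\<alpha> < 3" "i \<le> len \<alpha>"
  shows "bar (vtx \<alpha> i) = vtx \<alpha> (len \<alpha> - i)"
  unfolding th_bar_def
proof (rule someI2[where a="vtx \<alpha> (len \<alpha> - i)"])
  show "\<exists>\<beta> j. \<beta> < 3 \<and> j \<le> len \<beta> \<and> vtx \<alpha> i = vtx \<beta> j \<and> vtx \<alpha> (len \<alpha> - i) = vtx \<beta> (len \<beta> - j)"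
    using assms by blast
next
  fix y assume "\<exists>\<beta> j. \<beta> < 3 \<and> j \<le> len \<beta> \<and> vtx \<alpha> i = vtx \<beta> j \<and> y = vtx \<beta> (len \<beta> - j)"
  then obtain \<beta> j where j: "j \<le> len \<beta>" "vtx \<alpha> i = vtx \<beta> j" "y = vtx \<beta> (len \<beta> - j)"
    by blast
  consider "i = 0" | "i = len \<alpha>" | "0 < i" "i < len \<alpha>"
    using assms by linarith
  then show "y = vtx \<alpha> (len \<alpha> - i)"
  proof cases
    case 1
    then show ?thesis using j vtx_eq_p_iff[OF j(1)] by simp
  next
    case 2
    then show ?thesis using j vtx_eq_q_iff[OF j(1)] by simp
  next
    case 3
    then show ?thesis using j vtx_eq_interior_iff[OF j(1)] by metis
  qed
qed

lemma th_bar_in_V: "x \<in> VV \<Longrightarrow> bar x \<in> VV"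
  by (metis V_cases th_bar_vtx vtx_in_V diff_le_self)

lemma th_bar_bar: "x \<in> VV \<Longrightarrow> bar (bar x) = x"
  by (metis V_cases th_bar_vtx diff_le_self diff_diff_cancel)

text \<open>Only \<open>p\<close> and \<open>q\<close> have valence three, so this is the canonical divisor \<open>K\<^sub>G\<close>.\<close>

definition canonical :: "nat \<times> nat \<Rightarrow> int" where
  "canonical = chip p + chip q"

lemma chip_add_chip_bar: "x \<in> VV \<Longrightarrow> chip x + chip (bar x) \<approx> canonical"
proof -
  assume "x \<in> VV"
  then obtain \<alpha> i where i: "\<alpha> < 3" "i \<le> len \<alpha>" "x = vtx \<alpha> i" by (rule V_cases)
  have "chip x + chip (bar x)
      \<approx> (chip p + scale_div (int i) (step \<alpha>)) + (chip p + scale_div (int (len \<alpha> - i)) (step \<alpha>))"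
    unfolding i(3) th_bar_vtx[OF i(1,2)] using i by (intro lin_equiv_add chip_vtx_equiv) auto
  also have "\<dots> = chip p + (chip p + scale_div (int (len \<alpha>)) (step \<alpha>))"
    using i by (simp add: fun_eq_iff scale_div_def algebra_simps of_nat_diff)
  also have "\<dots> \<approx> canonical"
    unfolding canonical_def using chip_vtx_equiv[OF i(1) order_refl]
    by (intro lin_equiv_add lin_equiv_refl) (simp add: lin_equiv_sym)
  finally show ?thesis .
qed

section \<open>Effective representatives in degree at least two\<close>

definition step_comb :: "(nat \<Rightarrow> int) \<Rightarrow> nat \<times> nat \<Rightarrow> int" where
  "step_comb c = (\<lambda>x. \<Sum>\<alpha><3. c \<alpha> * step \<alpha> x)"

definition in_range :: "(nat \<Rightarrow> int) \<Rightarrow> bool" where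
  "in_range t \<longleftrightarrow> (\<forall>\<alpha><3. 0 \<le> t \<alpha> \<and> t \<alpha> \<le> int (len \<alpha>))"

definition tripod :: "(nat \<Rightarrow> int) \<Rightarrow> nat \<times> nat \<Rightarrow> int" where
  "tripod t = (\<lambda>x. \<Sum>\<alpha><3. chip (vtx \<alpha> (nat (t \<alpha>))) x)"

lemma step_comb_expand: "step_comb c = scale_div (c 0) (step 0) + scale_div (c 1) (step 1) + scale_div (c 2) (step 2)"
  by (simp add: step_comb_def fun_eq_iff scale_div_def sum_less_3)

lemma step_comb_add: "step_comb (\<lambda>\<alpha>. c \<alpha> + d \<alpha>) = step_comb c + step_comb d"
  by (simp add: step_comb_def fun_eq_iff algebra_simps sum.distrib)

lemma step_comb_scale: "step_comb (\<lambda>\<alpha>. k * c \<alpha>) = scale_div k (step_comb c)"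
  by (simp add: step_comb_def fun_eq_iff scale_div_def sum_distrib_left algebra_simps)

lemma step_comb_single: "\<gamma> < 3 \<Longrightarrow> step_comb (\<lambda>\<alpha>. if \<alpha> = \<gamma> then k else 0) = scale_div k (step \<gamma>)"
  by (simp add: step_comb_def fun_eq_iff scale_div_def if_distrib[where f="\<lambda>c. c * _"] cong: if_cong)

lemma step_comb_add_const: "step_comb (\<lambda>\<alpha>. c \<alpha> + k) \<approx> step_comb c"
proof -
  have "step_comb (\<lambda>\<alpha>. c \<alpha> + k) = step_comb c + scale_div k (step 0 + step 1 + step 2)"
    by (simp add: step_comb_expand fun_eq_iff scale_div_def algebra_simps)
  also have "\<dots> \<approx> step_comb c + scale_div k 0"
    by (intro lin_equiv_add lin_equiv_refl lin_equiv_scale steps_sum_equiv_0)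
  finally show ?thesis by simp
qed

lemma step_comb_full_path:
  assumes "\<gamma> < 3"
  shows "step_comb (\<lambda>\<alpha>. if \<alpha> = \<gamma> then int (len \<gamma>) * k else 0) \<approx> scale_div k (chip q - chip p)"
proof -
  have "chip q - chip p \<approx> chip p + scale_div (int (len \<gamma>)) (step \<gamma>) - chip p"
    using chip_vtx_equiv[OF assms order_refl] by (intro lin_equiv_diff lin_equiv_refl) simp
  then have "scale_div (int (len \<gamma>)) (step \<gamma>) \<approx> chip q - chip p"
    by (simp add: lin_equiv_sym)
  then have "scale_div k (scale_div (int (len \<gamma>)) (step \<gamma>)) \<approx> scale_div k (chip q - chip p)"
    by (rule lin_equiv_scale)
  moreover have "step_comb (\<lambda>\<alpha>. if \<alpha> = \<gamma> then int (len \<gamma>) * k else 0)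
      = scale_div k (scale_div (int (len \<gamma>)) (step \<gamma>))"
    using assms by (simp add: step_comb_single fun_eq_iff scale_div_def)
  ultimately show ?thesis by simp
qed

lemma equiv_multiple_p_plus_step_comb: "is_div VV D \<Longrightarrow> \<exists>c. D \<approx> scale_div (deg VV D) (chip p) + step_comb c"
proof -
  have rep: "finite A \<Longrightarrow> A \<subseteq> VV \<Longrightarrow>
      \<exists>c. (\<lambda>y. \<Sum>x\<in>A. D x * chip x y) \<approx> scale_div (\<Sum>x\<in>A. D x) (chip p) + step_comb c" for A
  proof (induction A rule: finite_induct)
    case empty
    show ?case by (rule exI[of _ "\<lambda>_. 0"]) (simp add: step_comb_def zero_fun_def)
  next
    case (insert x A)
    then obtain \<alpha> i where x: "\<alpha> < 3" "i \<le> len \<alpha>" "x = vtx \<alpha> i" by (auto elim: V_cases)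
    obtain c where c: "(\<lambda>y. \<Sum>x\<in>A. D x * chip x y) \<approx> scale_div (\<Sum>x\<in>A. D x) (chip p) + step_comb c"
      using insert by blast
    have "(\<lambda>y. \<Sum>x\<in>insert x A. D x * chip x y) = scale_div (D x) (chip x) + (\<lambda>y. \<Sum>x\<in>A. D x * chip x y)"
      using insert by (simp add: fun_eq_iff scale_div_def)
    also have "\<dots> \<approx> scale_div (D x) (chip p + scale_div (int i) (step \<alpha>))
                     + (scale_div (\<Sum>x\<in>A. D x) (chip p) + step_comb c)"
      unfolding x(3) by (intro lin_equiv_add lin_equiv_scale c chip_vtx_equiv x)
    also have "\<dots> = scale_div (\<Sum>x\<in>insert x A. D x) (chip p)
                     + step_comb (\<lambda>\<beta>. D x * (if \<beta> = \<alpha> then int i else 0) + c \<beta>)"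
      using insert x by (simp add: step_comb_add step_comb_scale step_comb_single fun_eq_iff
                                   scale_div_def algebra_simps)
    finally show ?case by blast
  qed
  assume "is_div VV D"
  then have "D y = (\<Sum>x\<in>VV. D x * chip x y)" for y
  proof (cases "y \<in> VV")
    case True
    then show ?thesis
      using finite_th_V by (simp add: chip_def if_distrib[where f="\<lambda>c. _ * c"] cong: if_cong)
  next
    case False
    then have "(\<Sum>x\<in>VV. D x * chip x y) = 0" by (intro sum.neutral) (auto simp: chip_def)
    moreover have "D y = 0" using False \<open>is_div VV D\<close> unfolding is_div_def by blast
    ultimately show ?thesis by simp
  qed
  then have "D = (\<lambda>y. \<Sum>x\<in>VV. D x * chip x y)" by (rule ext)
  moreover obtain c where "(\<lambda>y. \<Sum>x\<in>VV. D x * chip x y) \<approx> scale_div (deg VV D) (chip p) + step_comb c"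
    using rep[OF finite_th_V order_refl] unfolding deg_def by blast
  ultimately show ?thesis using eq_lin_equiv_trans by blast
qed

lemma tripod_equiv: "in_range t \<Longrightarrow> tripod t \<approx> scale_div 3 (chip p) + step_comb t"
proof -
  assume t: "in_range t"
  have chips: "chip (vtx \<alpha> (nat (t \<alpha>))) \<approx> chip p + scale_div (t \<alpha>) (step \<alpha>)" if "\<alpha> < 3" for \<alpha>
  proof -
    have "nat (t \<alpha>) \<le> len \<alpha>" "int (nat (t \<alpha>)) = t \<alpha>"
      using t that unfolding in_range_def by auto
    then show ?thesis using chip_vtx_equiv[of \<alpha> "nat (t \<alpha>)"] that by simp
  qed
  have "tripod t = chip (vtx 0 (nat (t 0))) + chip (vtx 1 (nat (t 1))) + chip (vtx 2 (nat (t 2)))"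
    by (simp add: tripod_def sum_less_3 fun_eq_iff)
  also have "\<dots> \<approx> (chip p + scale_div (t 0) (step 0)) + (chip p + scale_div (t 1) (step 1))
                         + (chip p + scale_div (t 2) (step 2))"
    by (intro lin_equiv_add chips) simp_all
  also have "\<dots> = scale_div 3 (chip p) + step_comb t"
    by (simp add: step_comb_expand fun_eq_iff scale_div_def algebra_simps)
  finally show ?thesis .
qed

lemma is_div_tripod: "in_range t \<Longrightarrow> is_div VV (tripod t)"
proof -
  assume "in_range t"
  then have "vtx \<alpha> (nat (t \<alpha>)) \<in> VV" if "\<alpha> < 3" for \<alpha>
    using that vtx_in_V unfolding in_range_def by (simp add: nat_le_iff)
  then show ?thesis unfolding is_div_def tripod_def by (auto intro!: sum.neutral simp: chip_def)
qed

lemma tripod_minus_p_effective: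
  assumes "\<gamma> < 3" "t \<gamma> = 0" shows "effective (tripod t - chip p)"
proof -
  have "chip p x \<le> tripod t x" for x
  proof -
    have "chip p x = chip (vtx \<gamma> (nat (t \<gamma>))) x" using assms(2) by simp
    also have "\<dots> \<le> tripod t x"
      unfolding tripod_def using assms(1) by (intro member_le_sum) (auto simp: chip_def)
    finally show ?thesis .
  qed
  then show ?thesis by (simp add: effective_def)
qed

lemma exists_argmin_3: "\<exists>\<gamma><3. \<forall>\<alpha><3. (t::nat \<Rightarrow> int) \<gamma> \<le> t \<alpha>"
proof -
  have "\<exists>\<gamma>\<in>{0,1,2}. \<forall>\<alpha>\<in>{0,1,2}. t \<gamma> \<le> t \<alpha>" by (simp; linarith)
  moreover have "{..<3} = {0, 1, 2::nat}" by auto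
  ultimately show ?thesis by (metis lessThan_iff)
qed

lemma in_range_normalize:
  assumes "in_range t" shows "\<exists>t'. in_range t' \<and> step_comb t \<approx> step_comb t' \<and> (\<exists>\<gamma><3. t' \<gamma> = 0)"
proof -
  obtain \<gamma> where \<gamma>: "\<gamma> < 3" "\<forall>\<alpha><3. t \<gamma> \<le> t \<alpha>" using exists_argmin_3 by blast
  have "0 \<le> t \<alpha> + - t \<gamma> \<and> t \<alpha> + - t \<gamma> \<le> int (len \<alpha>)" if "\<alpha> < 3" for \<alpha>
  proof -
    have "0 \<le> t \<gamma>" "t \<alpha> \<le> int (len \<alpha>)" "t \<gamma> \<le> t \<alpha>"
      using that assms \<gamma> unfolding in_range_def by auto
    then show ?thesis by linarith
  qed
  then have "in_range (\<lambda>\<alpha>. t \<alpha> + - t \<gamma>)" unfolding in_range_def by blast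
  moreover have "step_comb t \<approx> step_comb (\<lambda>\<alpha>. t \<alpha> + - t \<gamma>)"
    by (rule lin_equiv_sym[OF step_comb_add_const])
  ultimately show ?thesis using \<gamma>(1) by force
qed

text \<open>Subtract the minimal coordinate, then walk the corresponding path once more.\<close>

lemma in_range_add_q_minus_p:
  assumes "in_range t" shows "\<exists>t'. in_range t' \<and> step_comb t + (chip q - chip p) \<approx> step_comb t'"
proof -
  obtain t1 \<gamma> where t1: "in_range t1" "step_comb t \<approx> step_comb t1" "\<gamma> < 3" "t1 \<gamma> = 0"
    using in_range_normalize[OF assms] by blast
  let ?d = "\<lambda>\<alpha>. if \<alpha> = \<gamma> then int (len \<gamma>) * 1 else 0"
  have "in_range (\<lambda>\<alpha>. t1 \<alpha> + ?d \<alpha>)" using t1 unfolding in_range_def by auto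
  moreover have "step_comb t + (chip q - chip p) \<approx> step_comb t1 + step_comb ?d"
    using step_comb_full_path[OF t1(3), of 1] by (intro lin_equiv_add t1(2)) (simp add: lin_equiv_sym)
  ultimately show ?thesis unfolding step_comb_add[symmetric] by blast
qed

lemma in_range_add_multiple_q_minus_p:
  "in_range t \<Longrightarrow> \<exists>t'. in_range t' \<and> step_comb t + scale_div (int K) (chip q - chip p) \<approx> step_comb t'"
proof (induction K arbitrary: t)
  case (Suc K)
  obtain t1 where t1: "in_range t1" "step_comb t + (chip q - chip p) \<approx> step_comb t1"
    using in_range_add_q_minus_p[OF Suc.prems] by blast
  obtain t2 where t2: "in_range t2" "step_comb t1 + scale_div (int K) (chip q - chip p) \<approx> step_comb t2"
    using Suc.IH[OF t1(1)] by blast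
  have "step_comb t + scale_div (int (Suc K)) (chip q - chip p)
      = (step_comb t + (chip q - chip p)) + scale_div (int K) (chip q - chip p)"
    by (simp add: fun_eq_iff scale_div_def algebra_simps)
  also have "\<dots> \<approx> step_comb t1 + scale_div (int K) (chip q - chip p)"
    by (intro lin_equiv_add t1(2) lin_equiv_refl)
  finally show ?case using t2 lin_equiv_trans by blast
qed auto

text \<open>Shift the coefficients to make them nonnegative and reduce them modulo the path lengths;
  the quotients become multiples of \<open>q - p\<close>, which are absorbed one at a time.\<close>

lemma step_comb_reduce:
  "\<exists>t \<gamma>. in_range t \<and> \<gamma> < 3 \<and> t \<gamma> = 0 \<and> step_comb c \<approx> step_comb t"
proof -
  define s where "s = (\<lambda>\<alpha>. c \<alpha> + (\<bar>c 0\<bar> + \<bar>c 1\<bar> + \<bar>c 2\<bar>))"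
  define r where "r = (\<lambda>\<alpha>. s \<alpha> mod int (len \<alpha>))"
  define K where "K = (\<lambda>\<alpha>. s \<alpha> div int (len \<alpha>))"
  have len: "int (len \<alpha>) > 0" for \<alpha> using len_pos[of \<alpha>] by simp
  have K: "K \<alpha> \<ge> 0" if "\<alpha> < 3" for \<alpha>
    using less_3_cases[OF that] len[of \<alpha>] unfolding K_def s_def
    by (auto intro: pos_imp_zdiv_nonneg_iff[THEN iffD2])
  have s_split: "s \<alpha> = r \<alpha> + int (len \<alpha>) * K \<alpha>" for \<alpha>
    unfolding r_def K_def by simp
  have "in_range r"
    unfolding in_range_def r_def using len by (simp add: pos_mod_bound pos_mod_sign order.strict_implies_order)
  have "step_comb c \<approx> step_comb s"
    unfolding s_def by (rule lin_equiv_sym[OF step_comb_add_const])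
  also have "step_comb s = step_comb r + (step_comb (\<lambda>\<alpha>. if \<alpha> = 0 then int (len 0) * K 0 else 0)
       + step_comb (\<lambda>\<alpha>. if \<alpha> = 1 then int (len 1) * K 1 else 0)
       + step_comb (\<lambda>\<alpha>. if \<alpha> = 2 then int (len 2) * K 2 else 0))"
    by (simp add: step_comb_expand s_split fun_eq_iff scale_div_def algebra_simps)
  also have "\<dots> \<approx> step_comb r + (scale_div (K 0) (chip q - chip p) + scale_div (K 1) (chip q - chip p)
       + scale_div (K 2) (chip q - chip p))"
    by (intro lin_equiv_add lin_equiv_refl step_comb_full_path) auto
  also have "\<dots> = step_comb r + scale_div (int (nat (K 0 + K 1 + K 2))) (chip q - chip p)"
    using K[of 0] K[of 1] K[of 2] by (simp add: fun_eq_iff scale_div_def algebra_simps)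
  finally have "step_comb c \<approx> step_comb r + scale_div (int (nat (K 0 + K 1 + K 2))) (chip q - chip p)" .
  moreover obtain t1 where t1: "in_range t1"
    "step_comb r + scale_div (int (nat (K 0 + K 1 + K 2))) (chip q - chip p) \<approx> step_comb t1"
    using in_range_add_multiple_q_minus_p[OF \<open>in_range r\<close>] by blast
  moreover obtain t \<gamma> where "in_range t" "step_comb t1 \<approx> step_comb t" "\<gamma> < 3" "t \<gamma> = 0"
    using in_range_normalize[OF t1(1)] by blast
  ultimately show ?thesis by (meson lin_equiv_trans)
qed

text \<open>The tripod of a reduced combination has a chip at \<open>p\<close>, which pays for one of the
  three chips subtracted at \<open>p\<close>.\<close>

lemma equiv_eff_if_deg_ge_2:
  assumes "is_div VV D" "deg VV D \<ge> 2" shows "equiv_eff VV mm D"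
proof -
  obtain c where c: "D \<approx> scale_div (deg VV D) (chip p) + step_comb c"
    using equiv_multiple_p_plus_step_comb[OF assms(1)] by blast
  obtain t \<gamma> where t: "in_range t" "\<gamma> < 3" "t \<gamma> = 0" "step_comb c \<approx> step_comb t"
    using step_comb_reduce by blast
  have "D \<approx> scale_div (deg VV D) (chip p) + step_comb t"
    using c t(4) by (meson lin_equiv_add lin_equiv_refl lin_equiv_trans)
  also have "\<dots> = scale_div (deg VV D - 3) (chip p) + (scale_div 3 (chip p) + step_comb t)"
    by (simp add: fun_eq_iff scale_div_def algebra_simps)
  also have "\<dots> \<approx> scale_div (deg VV D - 3) (chip p) + tripod t"
    using tripod_equiv[OF t(1)] by (intro lin_equiv_add lin_equiv_refl) (simp add: lin_equiv_sym)
  also have "\<dots> = scale_div (deg VV D - 2) (chip p) + (tripod t - chip p)"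
    by (simp add: fun_eq_iff scale_div_def algebra_simps)
  finally show ?thesis
    using is_div_tripod[OF t(1)] tripod_minus_p_effective[of \<gamma> t, OF t(2,3)] assms(2)
    by (intro equiv_eff_I[of D "scale_div (deg VV D - 2) (chip p) + (tripod t - chip p)"]) auto
qed

end

section \<open>Cuts separate divisor classes\<close>

lemma exists_change_point:
  fixes P :: "nat \<Rightarrow> bool"
  assumes "P i" "\<not> P j" "i < j"
  shows "\<exists>k. i \<le> k \<and> k < j \<and> P k \<and> \<not> P (Suc k)"
  using assms
proof (induction j)
  case (Suc j)
  show ?case
  proof (cases "P j")
    case True
    then show ?thesis using Suc.prems by (intro exI[of _ j]) auto
  next
    case False
    then have "i < j" using Suc.prems by (cases "i = j") auto
    then show ?thesis using Suc.IH[OF Suc.prems(1) False] by auto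
  qed
qed simp

lemma sum_sum_of_bool_eq:
  assumes "finite S" "finite T"
  shows "(\<Sum>x\<in>S. \<Sum>y\<in>T. of_bool (x = a \<and> y = b) :: int) = of_bool (a \<in> S \<and> b \<in> T)"
proof -
  have "(\<Sum>x\<in>S. \<Sum>y\<in>T. of_bool (x = a \<and> y = b) :: int) = (\<Sum>x\<in>S. of_bool (x = a) * (\<Sum>y\<in>T. of_bool (y = b)))"
    by (simp add: sum_distrib_left of_bool_conj)
  also have "\<dots> = of_bool (a \<in> S) * of_bool (b \<in> T)"
    using assms by (simp add: sum_distrib_right[symmetric] of_bool_def sum.delta)
  finally show ?thesis by simp
qed

lemma sum_cut_of_bool_pair:
  assumes "finite S" "finite (V - S)" "a \<in> V" "b \<in> V"
  shows "(\<Sum>x\<in>S. \<Sum>y\<in>V-S. of_bool (x = a \<and> y = b) + of_bool (x = b \<and> y = a) :: int)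
           = of_bool ((a \<in> S) \<noteq> (b \<in> S))"
  unfolding sum.distrib sum_sum_of_bool_eq[OF assms(1,2)] using assms(3,4) by auto

context theta_graph
begin

definition crossing :: "(nat \<times> nat) set \<Rightarrow> (nat \<times> nat) set" where
  "crossing S = {e\<in>edges. (tail e \<in> S) \<noteq> (head e \<in> S)}"

lemma finite_crossing: "finite (crossing S)"
  using finite_edges by (simp add: crossing_def)

lemma cut_size_eq_card_crossing:
  assumes "S \<subseteq> VV" shows "cut_size S = int (card (crossing S))"
proof -
  have fin: "finite S" "finite (VV - S)" using finite_th_V assms finite_subset by auto
  have "cut_size S = (\<Sum>e\<in>edges. \<Sum>x\<in>S. \<Sum>y\<in>VV-S.
           of_bool (x = tail e \<and> y = head e) + of_bool (x = head e \<and> y = tail e))"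
    unfolding cut_size_def int_th_mult
    by (subst sum.swap, subst (2) sum.swap) (rule refl)
  also have "\<dots> = (\<Sum>e\<in>edges. of_bool (e \<in> crossing S))"
  proof (rule sum.cong[OF refl])
    fix e assume e: "e \<in> edges"
    show "(\<Sum>x\<in>S. \<Sum>y\<in>VV-S. of_bool (x = tail e \<and> y = head e) + of_bool (x = head e \<and> y = tail e))
        = (of_bool (e \<in> crossing S) :: int)"
      unfolding sum_cut_of_bool_pair[OF fin tail_in_V[OF e] head_in_V[OF e]]
      using e by (simp add: crossing_def)
  qed
  also have "\<dots> = int (card (crossing S))"
    using finite_edges by (simp add: crossing_def Int_def)
  finally show ?thesis .
qed

lemma path_crossing_edge:
  assumes "\<alpha> < 3" "i < j" "j \<le> len \<alpha>" "(vtx \<alpha> i \<in> S) \<noteq> (vtx \<alpha> j \<in> S)"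
  shows "\<exists>k. i \<le> k \<and> k < j \<and> (\<alpha>, k) \<in> crossing S"
proof -
  obtain k where "i \<le> k" "k < j" "(vtx \<alpha> k \<in> S) = (vtx \<alpha> i \<in> S)" "(vtx \<alpha> (Suc k) \<in> S) \<noteq> (vtx \<alpha> i \<in> S)"
    using exists_change_point[of "\<lambda>k. (vtx \<alpha> k \<in> S) = (vtx \<alpha> i \<in> S)" i j] assms by auto
  then show ?thesis
    using assms by (auto simp: crossing_def edges_def tail_def head_def)
qed

lemma cut_size_ge_3:
  assumes "S \<subseteq> VV" "(p \<in> S) \<noteq> (q \<in> S)" shows "cut_size S \<ge> 3"
proof -
  have ex: "\<exists>k. (\<alpha>, k) \<in> crossing S" if "\<alpha> < 3" for \<alpha>
    using path_crossing_edge[of \<alpha> 0 "len \<alpha>" S] assms that len_pos[of \<alpha>] by auto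
  obtain k0 k1 k2 where "(0, k0) \<in> crossing S" "(1, k1) \<in> crossing S" "(2, k2) \<in> crossing S"
    using ex[of 0] ex[of 1] ex[of 2] by auto
  then have "card {(0::nat, k0), (1, k1), (2, k2)} \<le> card (crossing S)"
    by (intro card_mono finite_crossing) auto
  then show ?thesis using cut_size_eq_card_crossing[OF assms(1)] by simp
qed

lemma cut_size_ge_2:
  assumes "S \<subseteq> VV" "S \<noteq> {}" "S \<noteq> VV" shows "cut_size S \<ge> 2"
proof (cases "(p \<in> S) = (q \<in> S)")
  case False
  then show ?thesis using cut_size_ge_3[OF assms(1)] by fastforce
next
  case True
  obtain x where x: "x \<in> VV" "(x \<in> S) \<noteq> (p \<in> S)"
    using assms by (cases "p \<in> S") auto
  obtain \<alpha> i where i: "\<alpha> < 3" "i \<le> len \<alpha>" "x = vtx \<alpha> i" by (rule V_cases[OF x(1)])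
  have "x \<noteq> p" "x \<noteq> q" using x True by auto
  then have "i \<noteq> 0" "i \<noteq> len \<alpha>" using i vtx_eq_p_iff[OF i(2)] vtx_eq_q_iff[OF i(2)] by auto
  then have "0 < i" "i < len \<alpha>" using i(2) by auto
  then obtain k1 k2 where "k1 < i" "(\<alpha>, k1) \<in> crossing S" "i \<le> k2" "(\<alpha>, k2) \<in> crossing S"
    using path_crossing_edge[of \<alpha> 0 i S] path_crossing_edge[of \<alpha> i "len \<alpha>" S] i x True
    by auto
  then have "card {(\<alpha>, k1), (\<alpha>, k2)} \<le> card (crossing S)"
    by (intro card_mono finite_crossing) auto
  then show ?thesis using cut_size_eq_card_crossing[OF assms(1)] \<open>k1 < i\<close> \<open>i \<le> k2\<close> by simp
qed

lemma sum_chip_over_subset: "S \<subseteq> VV \<Longrightarrow> (\<Sum>z\<in>S. chip x z) = of_bool (x \<in> S)"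
  using finite_th_V by (simp add: chip_def finite_subset)

lemma zero_or_cut_of_equiv:
  assumes "A \<approx> B"
  obtains "\<forall>x\<in>VV. A x = B x"
    | S where "S \<subseteq> VV" "S \<noteq> {}" "S \<noteq> VV" "(\<Sum>x\<in>S. A x) - (\<Sum>x\<in>S. B x) \<le> - cut_size S"
proof -
  have "0 \<approx> A - B" using assms lin_equiv_iff_diff lin_equiv_sym by blast
  from principal_div_zero_or_cut[OF this] that show ?thesis by (auto simp: sum_subtractf)
qed

lemma chip_equiv_chip_iff: "x \<in> VV \<Longrightarrow> y \<in> VV \<Longrightarrow> chip x \<approx> chip y \<longleftrightarrow> x = y"
proof
  assume xy: "x \<in> VV" "y \<in> VV" "chip x \<approx> chip y"
  from xy(3) show "x = y"
  proof (cases rule: zero_or_cut_of_equiv)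
    case 1
    then show ?thesis using xy(1) by (auto simp: chip_def split: if_splits)
  next
    case (2 S)
    then show ?thesis
      using cut_size_ge_2[of S] by (cases "x \<in> S"; cases "y \<in> S") (simp_all add: sum_chip_over_subset)
  qed
qed simp

text \<open>A cut of deficit two must separate \<open>p\<close> from \<open>q\<close>, and then it has three edges.\<close>

lemma chip_p_add_equiv_chip_q_add:
  assumes "g1 \<in> VV" "g2 \<in> VV" "chip p + chip g1 \<approx> chip q + chip g2" shows "g1 = q"
  using assms(3)
proof (cases rule: zero_or_cut_of_equiv)
  case 1
  then have "(chip p + chip g1) q = (chip q + chip g2) q" by simp
  then show ?thesis by (auto simp: chip_def split: if_splits)
next
  case (2 S)
  have "(p \<in> S) \<noteq> (q \<in> S)"
    using 2 cut_size_ge_2[of S]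
    by (cases "p \<in> S"; cases "q \<in> S"; cases "g1 \<in> S"; cases "g2 \<in> S") (simp_all add: sum.distrib sum_chip_over_subset)
  then show ?thesis
    using 2 cut_size_ge_3[of S]
    by (cases "p \<in> S"; cases "q \<in> S"; cases "g1 \<in> S"; cases "g2 \<in> S") (simp_all add: sum.distrib sum_chip_over_subset)
qed

section \<open>Ranks on theta graphs\<close>

abbreviation rk :: "(nat \<times> nat \<Rightarrow> int) \<Rightarrow> int" where "rk \<equiv> rank VV mm"

lemma rank_deg_1_le_0: "deg VV A = 1 \<Longrightarrow> rk A \<le> 0"
proof (rule ccontr)
  assume d: "deg VV A = 1" and "\<not> rk A \<le> 0"
  then have "rank_at_least A 1" using rank_ge_iff[of 1 A] by simp
  then have "equiv_eff VV mm (A - chip x)" if "x \<in> VV" for x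
    using rank_at_least_chip that by blast
  then have "A - chip x \<approx> 0" if "x \<in> VV" for x
    using that equiv_eff_deg_0_iff d by simp
  then have "A - chip p \<approx> 0" "A - chip q \<approx> 0" by simp_all
  then have "chip p \<approx> chip q"
    using lin_equiv_iff_diff by (meson lin_equiv_sym lin_equiv_trans)
  then show False using chip_equiv_chip_iff by simp
qed

lemma rank_deg_1: "deg VV A = 1 \<Longrightarrow> rk A = (if equiv_eff VV mm A then 0 else -1)"
  using rank_deg_1_le_0 rank_nonneg_iff rank_eq_minus1_iff by force

lemma rank_chip: "w \<in> VV \<Longrightarrow> rk (chip w) = 0"
  using rank_deg_1[of "chip w"] equiv_eff_I[of "chip w" "chip w"] by simp

lemma rank_chip_diff_chip: "w \<in> VV \<Longrightarrow> x \<in> VV \<Longrightarrow> w \<noteq> x \<Longrightarrow> rk (chip w - chip x) = -1"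
  using rank_deg_0[of "chip w - chip x"] chip_equiv_chip_iff lin_equiv_iff_diff by simp

lemma rank_ge_deg_minus_2: "is_div VV A \<Longrightarrow> deg VV A \<ge> 2 \<Longrightarrow> rk A \<ge> deg VV A - 2"
proof -
  assume A: "is_div VV A" "deg VV A \<ge> 2"
  have "rank_at_least A (nat (deg VV A - 2))"
    unfolding rank_at_least_def using A by (auto intro: equiv_eff_if_deg_ge_2)
  then show ?thesis using A(2) rank_ge_iff[of "nat (deg VV A - 2)" A] by simp
qed

lemma equiv_add_chip_if_rank_ge_1:
  assumes "deg VV A = 2" "rk A \<ge> 1" "x \<in> VV"
  obtains y where "y \<in> VV" "A \<approx> chip x + chip y"
proof -
  have "rank_at_least A 1" using assms(2) rank_ge_iff[of 1 A] by simp
  then have "equiv_eff VV mm (A - chip x)" using rank_at_least_chip assms(3) by blast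
  moreover have "deg VV (A - chip x) = 1" using assms by simp
  ultimately obtain y where "y \<in> VV" "A - chip x \<approx> chip y" using equiv_eff_deg_1_iff by blast
  then show ?thesis using that lin_equiv_add_if_diff by blast
qed

text \<open>A divisor of degree two and rank two would be equivalent to both \<open>2p\<close> and \<open>2q\<close>.\<close>

lemma rank_deg_2_bounds: "is_div VV A \<Longrightarrow> deg VV A = 2 \<Longrightarrow> 0 \<le> rk A \<and> rk A \<le> 1"
proof
  assume A: "is_div VV A" "deg VV A = 2"
  then show "0 \<le> rk A" using rank_ge_deg_minus_2 by fastforce
  show "rk A \<le> 1"
  proof (rule ccontr)
    assume "\<not> rk A \<le> 1"
    then have "rank_at_least A 2" using rank_ge_iff[of 2 A] by simp
    then have "equiv_eff VV mm (A - scale_div 2 (chip x))" if "x \<in> VV" for x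
      using that by (intro rank_at_leastD) simp_all
    then have "A - scale_div 2 (chip x) \<approx> 0" if "x \<in> VV" for x
      using that A equiv_eff_deg_0_iff by simp
    moreover have "scale_div 2 (chip x) = chip x + chip x" for x :: "nat \<times> nat"
      by (simp add: scale_div_def fun_eq_iff)
    ultimately have "A \<approx> chip x + chip x" if "x \<in> VV" for x
      using that lin_equiv_iff_diff by metis
    then have "chip p + chip p \<approx> chip q + chip q"
      using p_in_V q_in_V by (meson lin_equiv_sym lin_equiv_trans)
    then show False by (meson chip_p_add_equiv_chip_q_add p_in_V q_in_V p_ne_q)
  qed
qed

lemma equiv_canonical_if_rank_ge_1:
  assumes "deg VV A = 2" "rk A \<ge> 1" shows "A \<approx> canonical"
proof -
  obtain g1 g2 where g: "g1 \<in> VV" "A \<approx> chip p + chip g1" "g2 \<in> VV" "A \<approx> chip q + chip g2"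
    using equiv_add_chip_if_rank_ge_1[OF assms] p_in_V q_in_V by metis
  then have "g1 = q" using chip_p_add_equiv_chip_q_add by (meson lin_equiv_sym lin_equiv_trans)
  then show ?thesis using g(2) by (simp add: canonical_def)
qed

lemma rank_canonical: "rk canonical = 1"
proof -
  have "rank_at_least canonical 1" unfolding rank_at_least_def
  proof (intro allI impI)
    fix E assume "is_div VV E \<and> effective E \<and> deg VV E = int 1"
    then obtain z where z: "z \<in> VV" "E = chip z" using effective_deg_1 by fastforce
    have "canonical - chip z \<approx> chip (bar z)"
      using chip_add_chip_bar[OF z(1)] lin_equiv_diff_if_add lin_equiv_sym by blast
    then show "equiv_eff VV mm (canonical - E)"
      using z th_bar_in_V by (intro equiv_eff_I[of _ "chip (bar z)"]) auto
  qed
  then have "1 \<le> rk canonical" using rank_ge_iff[of 1 canonical] by simp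
  then show ?thesis using rank_deg_2_bounds[of canonical] by (simp add: canonical_def)
qed

lemma rank_chip_add_chip_bar: "x \<in> VV \<Longrightarrow> rk (chip x + chip (bar x)) = 1"
  using rank_canonical rank_cong[OF chip_add_chip_bar] by simp

end

locale rigid_theta = theta_graph +
  fixes u v :: "nat \<times> nat"
  assumes u_in_V: "u \<in> th_V n0 n1 n2" and v_in_V: "v \<in> th_V n0 n1 n2"
    and rigid: "rigidly_marked (th_V n0 n1 n2) (th_mult n0 n1 n2) u v"
begin

lemma rank_u_v: "rk (chip u + chip v) = 0"
  using rigid unfolding rigidly_marked_def by blast

text \<open>Rigidity bounds the rank from above: a divisor of rank at least \<open>d - 1\<close> could absorb
  \<open>u + v + (d - 3) u\<close> and would then be equivalent to \<open>u + v\<close> plus \<open>d - 2\<close> chips.\<close>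

lemma rank_le_deg_minus_2:
  assumes "is_div VV A" "deg VV A \<ge> 3" shows "rk A \<le> deg VV A - 2"
proof (rule ccontr)
  define k where "k = nat (deg VV A - 1)"
  assume "\<not> rk A \<le> deg VV A - 2"
  then have "rank_at_least A k" using assms rank_ge_iff[of k A] unfolding k_def by simp
  define E where "E = chip u + chip v + scale_div (int (k - 2)) (chip u)"
  have E: "is_div VV E" "effective E" "deg VV E = int k"
    unfolding E_def k_def using assms u_in_V v_in_V by (auto simp: of_nat_diff)
  then have "equiv_eff VV mm (A - E)" using \<open>rank_at_least A k\<close> rank_at_leastD by blast
  moreover have "deg VV (A - E) = 1" using E assms unfolding k_def by simp
  ultimately obtain w where w: "w \<in> VV" "A \<approx> E + chip w"
    using equiv_eff_deg_1_iff lin_equiv_add_if_diff by blast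
  then have "rk A \<le> rk E + 1" using rank_cong rank_add_chip_le by metis
  also have "rk E \<le> int (k - 2)"
    unfolding E_def using rank_add_scaled_chip_le[OF u_in_V, of "chip u + chip v" "k - 2"] rank_u_v
    by simp
  finally show False using \<open>\<not> rk A \<le> deg VV A - 2\<close> assms unfolding k_def by simp
qed

lemma rank_eq_deg_minus_2: "is_div VV A \<Longrightarrow> deg VV A \<ge> 3 \<Longrightarrow> rk A = deg VV A - 2"
  using rank_le_deg_minus_2 rank_ge_deg_minus_2 by fastforce

lemma bar_u_ne_v: "bar u \<noteq> v"
  using rank_chip_add_chip_bar[OF u_in_V] rank_u_v by auto

abbreviation \<Delta> :: "(nat \<times> nat \<Rightarrow> int) \<Rightarrow> int" where "\<Delta> \<equiv> Delta VV mm u v"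

lemma Delta_eq: "\<Delta> A = rk A - rk (A - chip u) - rk (A - chip v) + rk (A - chip u - chip v)"
  by (simp add: Delta_def)

lemma Delta_cong: "A \<approx> B \<Longrightarrow> \<Delta> A = \<Delta> B"
proof -
  assume AB: "A \<approx> B"
  then have "A - chip u \<approx> B - chip u" "A - chip v \<approx> B - chip v"
    by (simp_all add: lin_equiv_diff)
  then have "A - chip u - chip v \<approx> B - chip u - chip v"
    by (simp add: lin_equiv_diff)
  then show ?thesis
    using AB \<open>A - chip u \<approx> B - chip u\<close> \<open>A - chip v \<approx> B - chip v\<close>
    unfolding Delta_eq by (simp add: rank_cong)
qed

definition jump :: "(nat \<times> nat \<Rightarrow> int) \<Rightarrow> int" where
  "jump X =
     (if X \<approx> (\<lambda>x. 2 * chip u x) then -2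
      else if \<exists>w\<in>VV. w \<noteq> u \<and> w \<noteq> v \<and> X \<approx> chip u + chip w then -1
      else if \<exists>w\<in>VV. w \<noteq> bar u \<and> w \<noteq> bar v \<and> X \<approx> chip v + chip w then 1
      else if X \<approx> chip v + chip (bar u) then 2
      else 0)"

lemma double_chip: "(\<lambda>x. 2 * chip u x) = chip u + chip u"
  by (simp add: fun_eq_iff)

lemma rank_eq_0_if_no_u_summand:
  assumes "is_div VV X" "deg VV X = 2"
    and "\<not> X \<approx> (\<lambda>x. 2 * chip u x)" "\<not> (\<exists>w\<in>VV. w \<noteq> u \<and> w \<noteq> v \<and> X \<approx> chip u + chip w)"
  shows "rk X = 0"
proof (rule ccontr)
  assume "rk X \<noteq> 0"
  then have "rk X \<ge> 1" using rank_deg_2_bounds[OF assms(1,2)] by simp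
  then obtain y where "y \<in> VV" "X \<approx> chip u + chip y"
    using equiv_add_chip_if_rank_ge_1[OF assms(2)] u_in_V by blast
  moreover have "y \<noteq> v" using \<open>rk X \<ge> 1\<close> rank_cong[OF \<open>X \<approx> chip u + chip y\<close>] rank_u_v by auto
  ultimately show False using assms(3,4) double_chip by auto
qed

lemma not_equiv_u_v:
  assumes "\<not> (\<exists>w\<in>VV. w \<noteq> bar u \<and> w \<noteq> bar v \<and> X \<approx> chip v + chip w)" "\<not> X \<approx> chip v + chip (bar u)"
  shows "\<not> X \<approx> chip u + chip v"
proof
  assume "X \<approx> chip u + chip v"
  then have "X \<approx> chip v + chip u" by (simp add: add.commute)
  moreover have "u \<noteq> bar v" using bar_u_ne_v th_bar_bar[OF v_in_V] by auto
  ultimately show False using assms u_in_V by (cases "u = bar u") auto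
qed

lemma Delta_equiv_0: "A \<approx> 0 \<Longrightarrow> \<Delta> A = 1"
proof -
  assume "A \<approx> 0"
  then have "\<Delta> A = \<Delta> 0" by (rule Delta_cong)
  also have "\<dots> = 1"
    using u_in_V v_in_V rank_deg_0[of 0] rank_deg_neg[of "- chip u"] rank_deg_neg[of "- chip v"]
      rank_deg_neg[of "- chip u - chip v"]
    by (simp add: Delta_eq)
  finally show ?thesis .
qed

lemma Delta_equiv_chip: "A \<approx> chip w \<Longrightarrow> w \<in> VV \<Longrightarrow> w \<noteq> u \<Longrightarrow> w \<noteq> v \<Longrightarrow> \<Delta> A = 1"
proof -
  assume A: "A \<approx> chip w" and w: "w \<in> VV" "w \<noteq> u" "w \<noteq> v"
  have "\<Delta> A = \<Delta> (chip w)" using A by (rule Delta_cong)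
  also have "\<dots> = 1"
    using u_in_V v_in_V w rank_chip rank_chip_diff_chip rank_deg_neg[of "chip w - chip u - chip v"]
    by (simp add: Delta_eq)
  finally show ?thesis .
qed

lemma Delta_add_u:
  assumes X: "is_div VV X" "deg VV X = 2" "rk X = 0"
    and w: "w \<in> VV" "w \<noteq> bar u" "X \<approx> chip v + chip w"
  shows "\<Delta> (X + chip u) = 1"
proof -
  have "rk (X + chip u) = 1" using rank_eq_deg_minus_2[of "X + chip u"] X u_in_V by simp
  moreover have "rk (X + chip u - chip v) = 0"
  proof -
    have "X + chip u - chip v \<approx> chip u + chip w"
      using lin_equiv_diff[OF lin_equiv_add[OF w(3) lin_equiv_refl] lin_equiv_refl, of "chip u" "chip v"]
      by (simp add: algebra_simps)
    moreover have "\<not> chip u + chip w \<approx> canonical"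
    proof
      assume "chip u + chip w \<approx> canonical"
      then have "chip u + chip w \<approx> chip u + chip (bar u)"
        using chip_add_chip_bar[OF u_in_V] by (meson lin_equiv_sym lin_equiv_trans)
      then have "chip w \<approx> chip (bar u)" using lin_equiv_diff_if_add by fastforce
      then show False using chip_equiv_chip_iff w th_bar_in_V[OF u_in_V] by simp
    qed
    then have "rk (chip u + chip w) = 0"
      using rank_deg_2_bounds[of "chip u + chip w"] equiv_canonical_if_rank_ge_1[of "chip u + chip w"]
        u_in_V w(1) by fastforce
    ultimately show ?thesis using rank_cong by simp
  qed
  moreover have "X - chip v \<approx> chip w" using w(3) lin_equiv_diff_if_add by blast
  ultimately show ?thesis using X(3) rank_cong rank_chip[OF w(1)] by (simp add: Delta_eq)
qed

lemma Delta_add_2u: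
  assumes "is_div VV X" "deg VV X = 2" "X \<approx> chip v + chip (bar u)"
  shows "\<Delta> (X + scale_div 2 (chip u)) = 1"
proof -
  have "X + scale_div 2 (chip u) - chip u - chip v = (X - chip v) + chip u"
    by (simp add: scale_div_def fun_eq_iff)
  also have "\<dots> \<approx> chip (bar u) + chip u"
    using lin_equiv_diff_if_add[OF assms(3)] by (intro lin_equiv_add lin_equiv_refl)
  finally have "X + scale_div 2 (chip u) - chip u - chip v \<approx> chip u + chip (bar u)"
    by (simp add: add.commute)
  then have "rk (X + scale_div 2 (chip u) - chip u - chip v) = 1"
    using rank_cong rank_chip_add_chip_bar[OF u_in_V] by metis
  then show ?thesis
    using rank_eq_deg_minus_2 assms u_in_V v_in_V by (simp add: Delta_eq)
qed

lemma Delta_if_jump_0: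
  assumes X: "is_div VV X" "deg VV X = 2" and "jump X = 0"
  shows "\<Delta> X = 1"
proof -
  have no: "\<not> X \<approx> (\<lambda>x. 2 * chip u x)" "\<not> (\<exists>w\<in>VV. w \<noteq> u \<and> w \<noteq> v \<and> X \<approx> chip u + chip w)"
    "\<not> (\<exists>w\<in>VV. w \<noteq> bar u \<and> w \<noteq> bar v \<and> X \<approx> chip v + chip w)" "\<not> X \<approx> chip v + chip (bar u)"
    using \<open>jump X = 0\<close> unfolding jump_def by (auto split: if_splits)
  note not_uv = not_equiv_u_v[OF no(3,4)]
  have "\<not> equiv_eff VV mm (X - chip u)"
  proof
    assume "equiv_eff VV mm (X - chip u)"
    then obtain y where "y \<in> VV" "X \<approx> chip u + chip y"
      using equiv_eff_deg_1_iff X u_in_V lin_equiv_add_if_diff by fastforce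
    then show False using no(1,2) not_uv double_chip by (cases "y = u \<or> y = v") auto
  qed
  moreover have "\<not> equiv_eff VV mm (X - chip v)"
  proof
    assume "equiv_eff VV mm (X - chip v)"
    then obtain y where y: "y \<in> VV" "X \<approx> chip v + chip y"
      using equiv_eff_deg_1_iff X v_in_V lin_equiv_add_if_diff by fastforce
    then have "y = bar v" using no(3,4) by auto
    then have "X \<approx> chip u + chip (bar u)"
      using y chip_add_chip_bar u_in_V v_in_V by (meson lin_equiv_sym lin_equiv_trans)
    then show False
      using no(1,2) double_chip th_bar_in_V[OF u_in_V] bar_u_ne_v by (cases "bar u = u") auto
  qed
  moreover have "\<not> X - chip u - chip v \<approx> 0"
    using not_uv lin_equiv_add_if_diff[of X "chip u + chip v" 0] by (auto simp: diff_diff_eq)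
  ultimately show ?thesis
    using rank_eq_0_if_no_u_summand[OF X no(1,2)] X u_in_V v_in_V
    by (simp add: Delta_eq rank_deg_1 rank_deg_0)
qed

lemma Delta_add_jump:
  assumes "is_div VV X" "deg VV X = 2"
  shows "\<Delta> (X + scale_div (jump X) (chip u)) = 1"
proof -
  consider (two_u) "X \<approx> (\<lambda>x. 2 * chip u x)"
    | (u_w) w where "\<not> X \<approx> (\<lambda>x. 2 * chip u x)" "w \<in> VV" "w \<noteq> u" "w \<noteq> v" "X \<approx> chip u + chip w"
    | (v_w) w where "\<not> X \<approx> (\<lambda>x. 2 * chip u x)" "\<not> (\<exists>w\<in>VV. w \<noteq> u \<and> w \<noteq> v \<and> X \<approx> chip u + chip w)"
        "w \<in> VV" "w \<noteq> bar u" "w \<noteq> bar v" "X \<approx> chip v + chip w"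
    | (v_bar_u) "\<not> X \<approx> (\<lambda>x. 2 * chip u x)" "\<not> (\<exists>w\<in>VV. w \<noteq> u \<and> w \<noteq> v \<and> X \<approx> chip u + chip w)"
        "\<not> (\<exists>w\<in>VV. w \<noteq> bar u \<and> w \<noteq> bar v \<and> X \<approx> chip v + chip w)" "X \<approx> chip v + chip (bar u)"
    | (none) "\<not> X \<approx> (\<lambda>x. 2 * chip u x)" "\<not> (\<exists>w\<in>VV. w \<noteq> u \<and> w \<noteq> v \<and> X \<approx> chip u + chip w)"
        "\<not> (\<exists>w\<in>VV. w \<noteq> bar u \<and> w \<noteq> bar v \<and> X \<approx> chip v + chip w)" "\<not> X \<approx> chip v + chip (bar u)"
    by blast
  then show ?thesis
  proof cases
    case two_u
    have "jump X = -2" using two_u by (simp add: jump_def)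
    moreover have "(\<lambda>x. 2 * chip u x) + scale_div (-2) (chip u) = 0"
      by (simp add: scale_div_def fun_eq_iff)
    ultimately have "X + scale_div (jump X) (chip u) \<approx> 0"
      using lin_equiv_add[OF two_u lin_equiv_refl, of "scale_div (-2) (chip u)"] by simp
    then show ?thesis by (rule Delta_equiv_0)
  next
    case (u_w w)
    then have "jump X = -1" unfolding jump_def by auto
    then have "X + scale_div (jump X) (chip u) = X - chip u"
      by (simp add: scale_div_def fun_eq_iff)
    then have "X + scale_div (jump X) (chip u) \<approx> chip w"
      using lin_equiv_diff_if_add[OF u_w(5)] by simp
    then show ?thesis using Delta_equiv_chip u_w by blast
  next
    case (v_w w)
    then have "jump X = 1" unfolding jump_def by auto
    then show ?thesis using Delta_add_u[OF assms rank_eq_0_if_no_u_summand[OF assms v_w(1,2)] v_w(3,4,6)] by simp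
  next
    case v_bar_u
    then have "jump X = 2" unfolding jump_def by auto
    then show ?thesis using Delta_add_2u[OF assms v_bar_u(4)] by simp
  next
    case none
    then have "jump X = 0" unfolding jump_def by auto
    then show ?thesis using Delta_if_jump_0[OF assms] by simp
  qed
qed

end

section \<open>The transmission permutation\<close>

lemma le_if_step_mono:
  fixes g :: "int \<Rightarrow> int"
  assumes step: "\<And>a. g (a - 1) \<le> g a" and "a \<le> b"
  shows "g a \<le> g b"
  using \<open>a \<le> b\<close>
proof (induction b rule: int_ge_induct)
  case (step b)
  then show ?case using assms(1)[of "b + 1"] by simp
qed simp

lemma zero_one_step_unique:
  fixes g :: "int \<Rightarrow> int"
  assumes step: "\<And>a. g (a - 1) \<le> g a" and range: "\<And>a. 0 \<le> g a \<and> g a \<le> 1"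
    and jump: "g a0 - g (a0 - 1) = 1"
  shows "g a - g (a - 1) = (if a = a0 then 1 else 0)"
proof -
  have g_a0: "g a0 = 1" "g (a0 - 1) = 0" using jump range[of a0] range[of "a0 - 1"] by auto
  consider "a = a0" | "a0 < a" | "a < a0" by linarith
  then show ?thesis
  proof cases
    case 2
    then have "g a0 \<le> g (a - 1)" "g (a - 1) \<le> g a" using step le_if_step_mono[of g, OF step] by auto
    then show ?thesis using 2 g_a0 range[of a] by simp
  next
    case 3
    then have "g a \<le> g (a0 - 1)" "g (a - 1) \<le> g a" using step le_if_step_mono[of g, OF step] by auto
    then show ?thesis using 3 g_a0 range[of "a - 1"] by simp
  qed (use jump in simp)
qed

lemma zero_one_step_exists:
  fixes g :: "int \<Rightarrow> int"
  assumes step: "\<And>a. g (a - 1) \<le> g a" and range: "\<And>a. 0 \<le> g a \<and> g a \<le> 1"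
    and "g c0 = 0" "g c1 = 1"
  shows "\<exists>a. g a - g (a - 1) = 1"
proof -
  have "c0 < c1" using le_if_step_mono[of g c1 c0, OF step] assms(3,4) by linarith
  then obtain k where "g (c0 + int k) = 0" "g (c0 + int (Suc k)) \<noteq> 0"
    using exists_change_point[of "\<lambda>n. g (c0 + int n) = 0" 0 "nat (c1 - c0)"] assms(3,4) by auto
  then show ?thesis using range[of "c0 + int (Suc k)"] by (intro exI[of _ "c0 + int (Suc k)"]) simp
qed

locale rigid_theta_divisor = rigid_theta +
  fixes D :: "nat \<times> nat \<Rightarrow> int"
  assumes D_div: "is_div (th_V n0 n1 n2) D" and D_deg: "deg (th_V n0 n1 n2) D = 2"
begin

definition twisted :: "int \<Rightarrow> int \<Rightarrow> nat \<times> nat \<Rightarrow> int" where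
  "twisted a b = D + (\<lambda>x. a * chip u x) - (\<lambda>x. b * chip v x)"

definition twist :: "int \<Rightarrow> nat \<times> nat \<Rightarrow> int" where
  "twist t = D + (\<lambda>x. t * (chip u x - chip v x))"

definition tau :: "int \<Rightarrow> int" where
  "tau t = t + jump (twist t)"

lemma tau_eq:
  "tau t =
     (if twist t \<approx> (\<lambda>x. 2 * chip u x) then t - 2
      else if \<exists>w\<in>VV. w \<noteq> u \<and> w \<noteq> v \<and> twist t \<approx> chip u + chip w then t - 1
      else if \<exists>w\<in>VV. w \<noteq> bar u \<and> w \<noteq> bar v \<and> twist t \<approx> chip v + chip w then t + 1
      else if twist t \<approx> chip v + chip (bar u) then t + 2
      else t)"
  unfolding tau_def jump_def if_distrib[of "(+) t"] by (simp only: add_0_right diff_conv_add_uminus)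

lemma twisted_eq: "twisted a b = D + scale_div a (chip u) - scale_div b (chip v)"
  by (simp add: twisted_def scale_div_def fun_eq_iff)

lemma is_div_twisted: "is_div VV (twisted a b)"
  and deg_twisted: "deg VV (twisted a b) = 2 + a - b"
  using D_div D_deg u_in_V v_in_V by (simp_all add: twisted_eq)

lemma twisted_diff_u: "twisted a b - chip u = twisted (a - 1) b"
  and twisted_diff_v: "twisted a b - chip v = twisted a (b + 1)"
  by (simp_all add: twisted_def fun_eq_iff algebra_simps)

lemma twisted_tau: "twisted (tau t) t = twist t + scale_div (jump (twist t)) (chip u)"
  by (simp add: twisted_def twist_def tau_def scale_div_def fun_eq_iff algebra_simps)

lemma Delta_twisted_tau: "\<Delta> (twisted (tau t) t) = 1"
proof -
  have "twist t = twisted t t" by (simp add: twisted_def twist_def fun_eq_iff algebra_simps)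
  then have "is_div VV (twist t)" "deg VV (twist t) = 2"
    using is_div_twisted deg_twisted by simp_all
  then show ?thesis unfolding twisted_tau by (rule Delta_add_jump)
qed

lemma Delta_twisted_nonneg: "\<Delta> (twisted a b) \<ge> 0"
proof -
  have "submodular VV mm u v D" using rigid D_div unfolding rigidly_marked_def by blast
  then have "\<Delta> (D + (\<lambda>x. a * chip u x) + (\<lambda>x. (- b) * chip v x)) \<ge> 0"
    unfolding submodular_def by blast
  moreover have "D + (\<lambda>x. a * chip u x) + (\<lambda>x. (- b) * chip v x) = twisted a b"
    by (simp add: twisted_def fun_eq_iff)
  ultimately show ?thesis by simp
qed

text \<open>Along a column \<open>b\<close> and along a row \<open>a\<close>, \<open>\<Delta>\<close> is the increment of a monotone
  \<open>{0, 1}\<close>-valued function, so each column and each row contains a single \<open>1\<close>.\<close>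

definition v_gain :: "int \<Rightarrow> int \<Rightarrow> int" where
  "v_gain b a = rk (twisted a b) - rk (twisted a b - chip v)"

definition u_gain :: "int \<Rightarrow> int \<Rightarrow> int" where
  "u_gain a c = rk (twisted a (- c)) - rk (twisted a (- c) - chip u)"

lemma Delta_twisted_column: "\<Delta> (twisted a b) = v_gain b a - v_gain b (a - 1)"
  unfolding Delta_eq v_gain_def twisted_diff_u[symmetric] by simp

lemma Delta_twisted_row: "\<Delta> (twisted a (- c)) = u_gain a c - u_gain a (c - 1)"
  unfolding Delta_eq u_gain_def using twisted_diff_v[of a "- c"] by (simp add: algebra_simps)

lemma v_gain_step: "v_gain b (a - 1) \<le> v_gain b a"
  and v_gain_range: "0 \<le> v_gain b a \<and> v_gain b a \<le> 1"
  using Delta_twisted_column[of a b] Delta_twisted_nonneg[of a b] rank_diff_chip_bounds[OF v_in_V]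
  by (auto simp: v_gain_def)

lemma u_gain_step: "u_gain a (c - 1) \<le> u_gain a c"
  and u_gain_range: "0 \<le> u_gain a c \<and> u_gain a c \<le> 1"
  using Delta_twisted_row[of a c] Delta_twisted_nonneg[of a "- c"] rank_diff_chip_bounds[OF u_in_V]
  by (auto simp: u_gain_def)

lemma Delta_twisted: "\<Delta> (twisted a b) = (if a = tau b then 1 else 0)"
  using zero_one_step_unique[of "v_gain b" "tau b" a, OF v_gain_step v_gain_range]
    Delta_twisted_column Delta_twisted_tau by simp

lemma tau_inj: "inj tau"
proof (rule injI)
  fix b1 b2 assume "tau b1 = tau b2"
  then have "u_gain (tau b1) (- b1) - u_gain (tau b1) (- b1 - 1) = 1"
    "u_gain (tau b1) (- b2) - u_gain (tau b1) (- b2 - 1) = 1"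
    using Delta_twisted_row[of "tau b1" "- b1"] Delta_twisted_row[of "tau b1" "- b2"] Delta_twisted
    by simp_all
  then show "b1 = b2"
    using zero_one_step_unique[of "u_gain (tau b1)" "- b1" "- b2", OF u_gain_step u_gain_range]
    by (simp split: if_splits)
qed

lemma tau_surj: "surj tau"
proof -
  have "\<exists>b. tau b = a" for a
  proof -
    have "deg VV (twisted a (a + 3)) < 0" "deg VV (twisted a (a + 3) - chip u) < 0"
      using deg_twisted u_in_V by simp_all
    then have "u_gain a (- (a + 3)) = 0"
      unfolding u_gain_def minus_minus
      using rank_deg_neg[of "twisted a (a + 3)"] rank_deg_neg[of "twisted a (a + 3) - chip u"] by simp
    moreover have "u_gain a (- (a - 2)) = 1"
      using rank_eq_deg_minus_2[OF is_div_twisted] rank_eq_deg_minus_2[of "twisted a (a - 2) - chip u"]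
        is_div_twisted deg_twisted u_in_V unfolding u_gain_def by simp
    ultimately obtain c where "u_gain a c - u_gain a (c - 1) = 1"
      using zero_one_step_exists[of "u_gain a", OF u_gain_step u_gain_range] by blast
    then have "\<Delta> (twisted a (- c)) = 1" using Delta_twisted_row by simp
    then show ?thesis using Delta_twisted by (auto split: if_splits)
  qed
  then show ?thesis by (metis surjI)
qed

lemma transmission_eq_tau: "transmission VV mm u v D = tau"
  unfolding transmission_def
proof (rule the_equality)
  show "bij tau \<and> (\<forall>a b. (if tau b = a then 1 else 0) = \<Delta> (D + (\<lambda>x. a * chip u x) - (\<lambda>x. b * chip v x)))"
    using tau_inj tau_surj Delta_twisted unfolding twisted_def by (auto simp: bij_def eq_commute)
next
  fix \<sigma> assume "bij \<sigma> \<and> (\<forall>a b. (if \<sigma> b = a then 1 else 0) = \<Delta> (D + (\<lambda>x. a * chip u x) - (\<lambda>x. b * chip v x)))"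
  then have "(if \<sigma> b = tau b then 1 else 0) = \<Delta> (twisted (tau b) b)" for b
    unfolding twisted_def by blast
  then show "\<sigma> = tau" using Delta_twisted_tau by (intro ext) (metis zero_neq_one)
qed

end

theorem mainTheorem15:
  fixes n0 n1 n2 :: nat and u v :: "nat \<times> nat" and D :: "nat \<times> nat \<Rightarrow> int" and t :: int
  assumes "n0 \<ge> 1" "n1 \<ge> 1" "n2 \<ge> 1"
    and "u \<in> th_V n0 n1 n2" "v \<in> th_V n0 n1 n2"
    and "rigidly_marked (th_V n0 n1 n2) (th_mult n0 n1 n2) u v"
    and "is_div (th_V n0 n1 n2) D" "deg (th_V n0 n1 n2) D = 2"
  shows "let V = th_V n0 n1 n2; m = th_mult n0 n1 n2; bar = th_bar n0 n1 n2;
             Dt = D + (\<lambda>x. t * (chip u x - chip v x)) in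
         transmission V m u v D t =
           (if lin_equiv V m Dt (\<lambda>x. 2 * chip u x) then t - 2
            else if (\<exists>w\<in>V. w \<noteq> u \<and> w \<noteq> v \<and> lin_equiv V m Dt (chip u + chip w)) then t - 1
            else if (\<exists>w\<in>V. w \<noteq> bar u \<and> w \<noteq> bar v \<and> lin_equiv V m Dt (chip v + chip w)) then t + 1
            else if lin_equiv V m Dt (chip v + chip (bar u)) then t + 2
            else t)"
proof -
  interpret rigid_theta_divisor n0 n1 n2 u v D
    by unfold_locales (use assms in auto)
  show ?thesis
    unfolding Let_def transmission_eq_tau tau_eq twist_def ..
qed

end
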